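(* Let $\Omega\subseteq\mathbb{R}^N$ be a bounded domain with $C^2$-boundary, $\alpha>0$, $\beta>0$, $1<p<q<\infty$, and $\lambda>\beta\hat{\lambda}_1(q)$. Then every minimizing sequence for $m_\lambda=\inf\{\varphi_\lambda(u):u\in N_\lambda\}$, i.e. every sequence $(u_n)\subseteq N_\lambda$ with $\varphi_\lambda(u_n)\to m_\lambda$, is bounded in $W^{1,q}_0(\Omega)$.
   Context: $\hat{\lambda}_1(q)=\inf\{\|Du\|_q^q/\|u\|_q^q: u\in W^{1,q}_0(\Omega),\ u\neq 0\}>0$. The energy functional is $\varphi_\lambda(u)=\frac{\alpha}{p}\|Du\|_p^p+\frac{\beta}{q}\|Du\|_q^q-\frac{\lambda}{q}\|u\|_q^q$ for $u\in W^{1,q}_0(\Omega)$, and the Nehari manifold is $N_\lambda=\{u\in W^{1,q}_0(\Omega)\setminus\{0\}: \alpha\|Du\|_p^p+\beta\|Du\|_q^q=\lambda\|u\|_q^q\}$ (equivalently $\langle\varphi_\lambda'(u),u\rangle=0$, $u\ne0$). *)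

theory Defs
  imports "HOL-Analysis.Analysis"
begin

text \<open>Ambient space R^N is an arbitrary euclidean_space 'a (N = DIM('a)).\<close>

fun Ck :: "nat \<Rightarrow> ('a::euclidean_space \<Rightarrow> real) \<Rightarrow> bool" where
  "Ck 0 f = continuous_on UNIV f"
| "Ck (Suc k) f = ((\<forall>x. f differentiable (at x)) \<and>
      (\<forall>i\<in>Basis. Ck k (\<lambda>x. frechet_derivative f (at x) i)))"

definition smooth_fun :: "('a::euclidean_space \<Rightarrow> real) \<Rightarrow> bool" where
  "smooth_fun f = (\<forall>k. Ck k f)"

definition cgrad :: "('a::euclidean_space \<Rightarrow> real) \<Rightarrow> 'a \<Rightarrow> 'a" where
  "cgrad f x = (\<Sum>i\<in>Basis. frechet_derivative f (at x) i *\<^sub>R i)"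

definition test_fun :: "'a::euclidean_space set \<Rightarrow> ('a \<Rightarrow> real) \<Rightarrow> bool" where
  "test_fun \<Omega> \<phi> = (smooth_fun \<phi> \<and> compact (closure {x. \<phi> x \<noteq> 0})
       \<and> closure {x. \<phi> x \<noteq> 0} \<subseteq> \<Omega>)"

text \<open>Bounded domain with C^2 boundary: open, connected, bounded, and near every
  boundary point, after choosing a unit normal direction e, Omega is the
  supergraph of a C^2 function of the component orthogonal to e.\<close>
definition C2_boundary :: "'a::euclidean_space set \<Rightarrow> bool" where
  "C2_boundary \<Omega> = (\<forall>x0\<in>frontier \<Omega>. \<exists>r>0. \<exists>e \<gamma>. norm e = 1 \<and> Ck 2 \<gamma> \<and>
      \<Omega> \<inter> ball x0 r = {x\<in>ball x0 r. x \<bullet> e > \<gamma> (x - (x \<bullet> e) *\<^sub>R e)})"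

definition bounded_C2_domain :: "'a::euclidean_space set \<Rightarrow> bool" where
  "bounded_C2_domain \<Omega> = (open \<Omega> \<and> connected \<Omega> \<and> \<Omega> \<noteq> {} \<and> bounded \<Omega> \<and> C2_boundary \<Omega>)"

definition Lq_int :: "real \<Rightarrow> 'a::euclidean_space set \<Rightarrow> ('a \<Rightarrow> real) \<Rightarrow> real" where
  "Lq_int q \<Omega> f = enn2real (\<integral>\<^sup>+ x\<in>\<Omega>. ennreal (\<bar>f x\<bar> powr q) \<partial>lborel)"

definition Lq_int_vec :: "real \<Rightarrow> 'a::euclidean_space set \<Rightarrow> ('a \<Rightarrow> 'a) \<Rightarrow> real" where
  "Lq_int_vec q \<Omega> g = enn2real (\<integral>\<^sup>+ x\<in>\<Omega>. ennreal (norm (g x) powr q) \<partial>lborel)"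

text \<open>u in W^{1,q}_0(Omega) with weak gradient g: limit in W^{1,q} of test functions.\<close>
definition sobolev0 :: "real \<Rightarrow> 'a::euclidean_space set \<Rightarrow> ('a \<Rightarrow> real) \<Rightarrow> ('a \<Rightarrow> 'a) \<Rightarrow> bool" where
  "sobolev0 q \<Omega> u g = (u \<in> borel_measurable lborel \<and> g \<in> borel_measurable lborel \<and>
     (\<exists>\<phi>. (\<forall>k. test_fun \<Omega> (\<phi> k)) \<and>
        ((\<lambda>k. \<integral>\<^sup>+ x\<in>\<Omega>. ennreal (\<bar>\<phi> k x - u x\<bar> powr q) \<partial>lborel) \<longlonglongrightarrow> 0) \<and>
        ((\<lambda>k. \<integral>\<^sup>+ x\<in>\<Omega>. ennreal (norm (cgrad (\<phi> k) x - g x) powr q) \<partial>lborel) \<longlonglongrightarrow> 0)))"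

definition W0 :: "real \<Rightarrow> 'a::euclidean_space set \<Rightarrow> ('a \<Rightarrow> real) set" where
  "W0 q \<Omega> = {u. \<exists>g. sobolev0 q \<Omega> u g}"

text \<open>Weak gradient Du (unique up to null sets, so all integrals below are well defined).\<close>
definition D :: "real \<Rightarrow> 'a::euclidean_space set \<Rightarrow> ('a \<Rightarrow> real) \<Rightarrow> 'a \<Rightarrow> 'a" where
  "D q \<Omega> u = (SOME g. sobolev0 q \<Omega> u g)"

definition W_norm :: "real \<Rightarrow> 'a::euclidean_space set \<Rightarrow> ('a \<Rightarrow> real) \<Rightarrow> real" where
  "W_norm q \<Omega> u = Lq_int q \<Omega> u powr (1/q) + Lq_int_vec q \<Omega> (D q \<Omega> u) powr (1/q)"

text \<open>hat lambda_1(q); u \<noteq> 0 in W^{1,q}_0 means ||u||_q \<noteq> 0.\<close>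
definition lambda1_hat :: "real \<Rightarrow> 'a::euclidean_space set \<Rightarrow> real" where
  "lambda1_hat q \<Omega> = Inf {Lq_int_vec q \<Omega> (D q \<Omega> u) / Lq_int q \<Omega> u | u. u \<in> W0 q \<Omega> \<and> Lq_int q \<Omega> u \<noteq> 0}"

definition energy :: "real \<Rightarrow> real \<Rightarrow> real \<Rightarrow> real \<Rightarrow> real \<Rightarrow> 'a::euclidean_space set \<Rightarrow> ('a \<Rightarrow> real) \<Rightarrow> real" where
  "energy \<alpha> \<beta> p q lam \<Omega> u = \<alpha> / p * Lq_int_vec p \<Omega> (D q \<Omega> u) + \<beta> / q * Lq_int_vec q \<Omega> (D q \<Omega> u)
      - lam / q * Lq_int q \<Omega> u"

definition nehari :: "real \<Rightarrow> real \<Rightarrow> real \<Rightarrow> real \<Rightarrow> real \<Rightarrow> 'a::euclidean_space set \<Rightarrow> ('a \<Rightarrow> real) set" where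
  "nehari \<alpha> \<beta> p q lam \<Omega> = {u \<in> W0 q \<Omega>. Lq_int q \<Omega> u \<noteq> 0 \<and>
      \<alpha> * Lq_int_vec p \<Omega> (D q \<Omega> u) + \<beta> * Lq_int_vec q \<Omega> (D q \<Omega> u) = lam * Lq_int q \<Omega> u}"

definition m_lambda :: "real \<Rightarrow> real \<Rightarrow> real \<Rightarrow> real \<Rightarrow> real \<Rightarrow> 'a::euclidean_space set \<Rightarrow> real" where
  "m_lambda \<alpha> \<beta> p q lam \<Omega> = Inf (energy \<alpha> \<beta> p q lam \<Omega> ` nehari \<alpha> \<beta> p q lam \<Omega>)"

end

theory Submission
  imports Defs
begin

text \<open>On the Nehari manifold the energy equals \<open>\<alpha> (1/p - 1/q) \<parallel>Du\<parallel>\<^sub>p\<^sup>p\<close>, so along a minimizing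
  sequence \<open>\<parallel>Du\<parallel>\<^sub>p\<close> stays bounded, while the Nehari identity gives
  \<open>\<beta> \<parallel>Du\<parallel>\<^sub>q\<^sup>q \<le> \<bar>\<lambda>\<bar> \<parallel>u\<parallel>\<^sub>q\<^sup>q\<close>. Both norms are then bounded by an Ehrling-type inequality
  \<open>\<parallel>u\<parallel>\<^sub>q\<^sup>q \<le> \<delta> \<parallel>Du\<parallel>\<^sub>q\<^sup>q + K(\<delta>, \<parallel>Du\<parallel>\<^sub>p)\<close> with \<open>\<delta>\<close> small enough to absorb the gradient term.

  For a test function \<open>\<phi>\<close> the inequality comes from comparing \<open>\<phi>\<close> with its averages over balls of
  radius \<open>h\<close>: the difference is at most \<open>h \<parallel>\<nabla>\<phi>\<parallel>\<^sub>q\<close>, whereas the averages are bounded by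
  \<open>\<parallel>\<phi>\<parallel>\<^sub>1 / |B\<^sub>h|\<close>, and \<open>\<parallel>\<phi>\<parallel>\<^sub>1 \<le> 2R \<parallel>\<nabla>\<phi>\<parallel>\<^sub>1 \<le> 2R |\<Omega>|\<^bsup>1-1/p\<^esup> \<parallel>\<nabla>\<phi>\<parallel>\<^sub>p\<close>
  (translate \<open>\<phi>\<close> off its support, then Jensen). Elements of \<open>W0 q \<Omega>\<close> inherit it from nearby
  test functions.\<close>

section \<open>Integral inequalities\<close>

lemma powr_add_le_two_powr:
  fixes s t r :: real
  assumes "s \<ge> 0" "t \<ge> 0" "r > 0"
  shows "(s + t) powr r \<le> 2 powr r * (s powr r + t powr r)"
proof -
  have "(s + t) powr r \<le> (2 * max s t) powr r" using assms by (intro powr_mono2) auto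
  also have "\<dots> = 2 powr r * max s t powr r" using assms by (simp add: powr_mult)
  also have "max s t powr r \<le> s powr r + t powr r" using assms by (auto simp: max_def)
  finally show ?thesis by simp
qed

lemma powr_le_one_plus_powr:
  fixes w p q :: real
  assumes "w \<ge> 0" "0 < p" "p \<le> q"
  shows "w powr p \<le> 1 + w powr q"
proof (cases "w \<le> 1")
  case True
  then have "w powr p \<le> 1" using assms by (intro powr_le1) auto
  then show ?thesis by (smt (verit) powr_ge_zero)
next
  case False
  then have "w powr p \<le> w powr q" using assms by (intro powr_mono) auto
  then show ?thesis by simp
qed

text \<open>The tangent-line inequality for the convex function \<open>t \<mapsto> t powr q\<close> at \<open>c\<close>.\<close>
lemma young_tangent_powr:
  fixes q c f :: real
  assumes "q > 1" "c \<ge> 0" "f \<ge> 0"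
  shows "q * c powr (q-1) * f \<le> f powr q + (q-1) * c powr q"
proof -
  have q': "q/(q-1) > 1" using assms by (simp add: field_simps)
  have e: "1/q + 1/(q/(q-1)) = 1" using assms by (simp add: field_simps)
  have "f * c powr (q-1) \<le> f powr q / q + (c powr (q-1)) powr (q/(q-1)) / (q/(q-1))"
    by (rule Youngs_inequality) (use assms q' e in auto)
  also have "(c powr (q-1)) powr (q/(q-1)) = c powr q"
    using assms by (simp add: powr_powr)
  finally have "f * c powr (q-1) \<le> f powr q / q + c powr q * (q-1) / q"
    by (simp add: field_simps)
  then have "q * (f * c powr (q-1)) \<le> q * (f powr q / q + c powr q * (q-1) / q)"
    using assms by (intro mult_left_mono) auto
  also have "\<dots> = f powr q + (q-1) * c powr q"
    using assms by (simp add: field_simps)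
  finally show ?thesis by (simp add: mult_ac)
qed

lemma nn_integral_indicator_le_measure:
  fixes f :: "'b::euclidean_space \<Rightarrow> real"
  assumes "emeasure lborel A = ennreal m" "\<And>x. x \<in> A \<Longrightarrow> 0 \<le> f x" "\<And>x. x \<in> A \<Longrightarrow> f x \<le> B"
    and "B \<ge> 0" "A \<in> sets lborel"
  shows "(\<integral>\<^sup>+x. ennreal (indicator A x * f x) \<partial>lborel) \<le> ennreal (B * m)"
proof -
  have "(\<integral>\<^sup>+x. ennreal (indicator A x * f x) \<partial>lborel) \<le> (\<integral>\<^sup>+x. ennreal B * indicator A x \<partial>lborel)"
    using assms by (intro nn_integral_mono) (auto split: split_indicator intro!: ennreal_leI)
  also have "\<dots> = ennreal (B * m)"
    using assms by (simp add: nn_integral_cmult_indicator ennreal_mult')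
  finally show ?thesis .
qed

lemma nn_integral_indicator_less_top:
  fixes f :: "'b::euclidean_space \<Rightarrow> real"
  assumes "emeasure lborel A = ennreal m" "\<And>x. x \<in> A \<Longrightarrow> 0 \<le> f x" "\<And>x. x \<in> A \<Longrightarrow> f x \<le> B"
    and "B \<ge> 0" "A \<in> sets lborel"
  shows "(\<integral>\<^sup>+x. ennreal (indicator A x * f x) \<partial>lborel) < \<infinity>"
  using nn_integral_indicator_le_measure[of A m f B] assms by (simp add: le_less_trans)

lemma nn_integral_tangent_powr:
  fixes f :: "'b::euclidean_space \<Rightarrow> real"
  assumes A: "A \<in> sets lborel" "emeasure lborel A = ennreal m" "m \<ge> 0"
    and f: "f \<in> borel_measurable lborel" "\<And>x. x \<in> A \<Longrightarrow> 0 \<le> f x"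
    and q: "q > 1" and c: "c \<ge> 0"
    and I1: "(\<integral>\<^sup>+x. ennreal (indicator A x * f x) \<partial>lborel) = ennreal I1" "I1 \<ge> 0"
    and Iq: "(\<integral>\<^sup>+x. ennreal (indicator A x * f x powr q) \<partial>lborel) = ennreal Iq" "Iq \<ge> 0"
  shows "q * c powr (q-1) * I1 \<le> Iq + (q-1) * c powr q * m"
proof -
  have pt: "ennreal (indicator A x * (q * c powr (q-1) * f x))
      \<le> ennreal (indicator A x * f x powr q) + ennreal ((q-1) * c powr q) * indicator A x" for x
    using young_tangent_powr[OF q c, of "f x"] f(2)[of x] q
    by (auto split: split_indicator simp flip: ennreal_plus)
  have [measurable]: "(\<lambda>x. ennreal (indicator A x * f x)) \<in> borel_measurable lborel"
    using f(1) A(1) by measurable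
  have measr: "(\<lambda>x. indicator A x * f x powr q) \<in> borel_measurable borel"
    using f(1) A(1) by simp
  have "ennreal (q * c powr (q-1)) * ennreal I1
      = (\<integral>\<^sup>+x. ennreal (q * c powr (q-1)) * ennreal (indicator A x * f x) \<partial>lborel)"
    by (subst nn_integral_cmult) (auto simp: I1)
  also have "\<dots> = (\<integral>\<^sup>+x. ennreal (indicator A x * (q * c powr (q-1) * f x)) \<partial>lborel)"
    using q c f(2) by (intro nn_integral_cong) (auto simp: ennreal_mult split: split_indicator)
  also have "\<dots> \<le> (\<integral>\<^sup>+x. ennreal (indicator A x * f x powr q)
                          + ennreal ((q-1) * c powr q) * indicator A x \<partial>lborel)"
    by (intro nn_integral_mono pt)
  also have "\<dots> = ennreal Iq + ennreal ((q-1) * c powr q) * emeasure lborel A"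
    using A measr by (subst nn_integral_add) (auto simp: Iq nn_integral_cmult_indicator)
  finally have "ennreal (q * c powr (q-1) * I1) \<le> ennreal Iq + ennreal ((q-1) * c powr q) * ennreal m"
    using q c I1 by (simp add: ennreal_mult A(2))
  also have "\<dots> = ennreal (Iq + (q-1) * c powr q * m)"
    using q c Iq A(3) by (simp add: ennreal_mult ennreal_plus)
  finally show ?thesis
    using q c Iq A(3) by (subst (asm) ennreal_le_iff) auto
qed

lemma nn_integral_powr_mean:
  fixes f :: "'b::euclidean_space \<Rightarrow> real"
  assumes A: "A \<in> sets lborel" "emeasure lborel A = ennreal m" "m > 0"
    and f: "f \<in> borel_measurable lborel" "\<And>x. x \<in> A \<Longrightarrow> 0 \<le> f x" "\<And>x. x \<in> A \<Longrightarrow> f x \<le> B"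
    and q: "q \<ge> 1"
  shows "enn2real (\<integral>\<^sup>+x. ennreal (indicator A x * f x) \<partial>lborel) powr q
         \<le> m powr (q-1) * enn2real (\<integral>\<^sup>+x. ennreal (indicator A x * f x powr q) \<partial>lborel)"
proof (cases "q = 1")
  case True
  have "(\<integral>\<^sup>+x. ennreal (indicator A x * f x powr 1) \<partial>lborel) = (\<integral>\<^sup>+x. ennreal (indicator A x * f x) \<partial>lborel)"
    using f(2) by (intro nn_integral_cong) (auto split: split_indicator)
  then show ?thesis using True A(3) by simp
next
  case False
  then have q: "q > 1" using q by simp
  obtain a where "a \<in> A" using A by fastforce
  then have B0: "0 \<le> B" using f by force
  define I1 where "I1 = enn2real (\<integral>\<^sup>+x. ennreal (indicator A x * f x) \<partial>lborel)"
  define Iq where "Iq = enn2real (\<integral>\<^sup>+x. ennreal (indicator A x * f x powr q) \<partial>lborel)"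
  have "(\<integral>\<^sup>+x. ennreal (indicator A x * f x) \<partial>lborel) < \<infinity>"
    by (rule nn_integral_indicator_less_top[OF A(2) f(2,3) B0 A(1)])
  then have I1: "(\<integral>\<^sup>+x. ennreal (indicator A x * f x) \<partial>lborel) = ennreal I1" "I1 \<ge> 0"
    unfolding I1_def by (auto simp: less_top)
  have "(\<integral>\<^sup>+x. ennreal (indicator A x * f x powr q) \<partial>lborel) < \<infinity>"
    using q f B0 by (intro nn_integral_indicator_less_top[OF A(2), of _ "B powr q"] powr_mono2 A(1)) auto
  then have Iq: "(\<integral>\<^sup>+x. ennreal (indicator A x * f x powr q) \<partial>lborel) = ennreal Iq" "Iq \<ge> 0"
    unfolding Iq_def by (auto simp: less_top)
  define c where "c = I1 / m"
  have c0: "c \<ge> 0" and I1_eq: "I1 = c * m" using I1 A by (simp_all add: c_def)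
  have ineq: "q * c powr (q-1) * I1 \<le> Iq + (q-1) * c powr q * m"
    using A(3) by (intro nn_integral_tangent_powr[OF A(1,2) _ f(1,2) q c0 I1 Iq]) simp
  have "c powr (q-1) * I1 = c powr q * m"
  proof (cases "c = 0")
    case False
    have "c powr (q-1) * c powr 1 = c powr q" by (simp only: powr_add[symmetric]) simp
    then show ?thesis using c0 I1_eq by (metis mult.assoc powr_one)
  qed simp
  then have "q * (c powr q * m) \<le> Iq + (q-1) * (c powr q * m)"
    using ineq by (metis mult.assoc mult.commute)
  then have cm: "c powr q * m \<le> Iq" by (simp add: algebra_simps)
  have "I1 powr q = (c powr q * m) * m powr (q-1)"
  proof -
    have "I1 powr q = c powr q * m powr q" using c0 A I1_eq by (simp add: powr_mult)
    also have "m powr q = m powr 1 * m powr (q-1)" by (simp only: powr_add[symmetric]) simp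
    finally show ?thesis using A by (simp add: mult_ac)
  qed
  then show ?thesis
    unfolding I1_def[symmetric] Iq_def[symmetric] using A cm
    by (simp add: mult.commute mult_left_mono)
qed

lemma nn_integral_set_le_measure:
  fixes f :: "'a::euclidean_space \<Rightarrow> real"
  assumes "\<Omega> \<in> sets lborel" "emeasure lborel \<Omega> = ennreal W" "\<And>x. x \<in> \<Omega> \<Longrightarrow> f x \<le> B" "B \<ge> 0"
  shows "(\<integral>\<^sup>+x\<in>\<Omega>. ennreal (f x) \<partial>lborel) \<le> ennreal (B * W)"
proof -
  have "(\<integral>\<^sup>+x\<in>\<Omega>. ennreal (f x) \<partial>lborel) \<le> (\<integral>\<^sup>+x. ennreal B * indicator \<Omega> x \<partial>lborel)"
    using assms by (intro nn_integral_mono) (auto split: split_indicator intro!: ennreal_leI)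
  also have "\<dots> = ennreal (B * W)"
    using assms by (simp add: nn_integral_cmult_indicator ennreal_mult')
  finally show ?thesis .
qed

lemma nn_integral_set_bounded_eq_ennreal:
  fixes f :: "'a::euclidean_space \<Rightarrow> real"
  assumes "\<Omega> \<in> sets lborel" "emeasure lborel \<Omega> = ennreal W" "\<And>x. x \<in> \<Omega> \<Longrightarrow> f x \<le> B" "B \<ge> 0"
  shows "(\<integral>\<^sup>+x\<in>\<Omega>. ennreal (f x) \<partial>lborel) = ennreal (enn2real (\<integral>\<^sup>+x\<in>\<Omega>. ennreal (f x) \<partial>lborel))"
  using nn_integral_set_le_measure[of \<Omega> W f B] assms by (simp add: le_less_trans less_top)

lemma nn_integral_eq_set_nn_integral_if_vanishing:
  assumes "\<And>x. x \<notin> \<Omega> \<Longrightarrow> f x = 0"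
  shows "(\<integral>\<^sup>+x. f x \<partial>lborel) = (\<integral>\<^sup>+x\<in>\<Omega>. f x \<partial>lborel)"
  using assms by (intro nn_integral_cong) (auto split: split_indicator)

lemma nn_integral_vanishing_bounded_eq_ennreal:
  fixes f :: "'a::euclidean_space \<Rightarrow> real"
  assumes "\<Omega> \<in> sets lborel" "emeasure lborel \<Omega> = ennreal W" "\<And>x. f x \<le> B" "B \<ge> 0"
    and "\<And>x. x \<notin> \<Omega> \<Longrightarrow> f x = 0"
  shows "(\<integral>\<^sup>+x. ennreal (f x) \<partial>lborel) = ennreal (enn2real (\<integral>\<^sup>+x\<in>\<Omega>. ennreal (f x) \<partial>lborel))"
  using nn_integral_set_bounded_eq_ennreal[of \<Omega> W f B] nn_integral_eq_set_nn_integral_if_vanishing[of \<Omega> "\<lambda>x. ennreal (f x)"]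
    assms by simp

lemma nn_integral_set_powr_le_sum:
  fixes F G H :: "'a::euclidean_space \<Rightarrow> real"
  assumes [measurable]: "F \<in> borel_measurable lborel" "G \<in> borel_measurable lborel" "H \<in> borel_measurable lborel"
    and le: "\<And>x. F x \<le> G x + H x" and nn: "\<And>x. 0 \<le> F x" "\<And>x. 0 \<le> G x" "\<And>x. 0 \<le> H x"
    and r: "r > 0" and \<Omega>: "\<Omega> \<in> sets lborel"
  shows "(\<integral>\<^sup>+x\<in>\<Omega>. ennreal (F x powr r) \<partial>lborel)
    \<le> ennreal (2 powr r) * ((\<integral>\<^sup>+x\<in>\<Omega>. ennreal (G x powr r) \<partial>lborel) + (\<integral>\<^sup>+x\<in>\<Omega>. ennreal (H x powr r) \<partial>lborel))"
proof -
  have pt: "ennreal (F x powr r) * indicator \<Omega> x \<le> ennreal (2 powr r)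
      * (ennreal (G x powr r) * indicator \<Omega> x + ennreal (H x powr r) * indicator \<Omega> x)" for x
  proof -
    have "F x powr r \<le> (G x + H x) powr r" using le nn r by (intro powr_mono2) auto
    also have "\<dots> \<le> 2 powr r * (G x powr r + H x powr r)"
      using nn r by (intro powr_add_le_two_powr) auto
    finally have "ennreal (F x powr r) \<le> ennreal (2 powr r) * (ennreal (G x powr r) + ennreal (H x powr r))"
      by (simp add: ennreal_leI flip: ennreal_mult ennreal_plus)
    then show ?thesis by (auto split: split_indicator)
  qed
  have "(\<integral>\<^sup>+x\<in>\<Omega>. ennreal (F x powr r) \<partial>lborel) \<le> (\<integral>\<^sup>+x. ennreal (2 powr r)
      * (ennreal (G x powr r) * indicator \<Omega> x + ennreal (H x powr r) * indicator \<Omega> x) \<partial>lborel)"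
    by (intro nn_integral_mono pt)
  also have "\<dots> = ennreal (2 powr r)
      * ((\<integral>\<^sup>+x\<in>\<Omega>. ennreal (G x powr r) \<partial>lborel) + (\<integral>\<^sup>+x\<in>\<Omega>. ennreal (H x powr r) \<partial>lborel))"
    using \<Omega> by (simp add: nn_integral_cmult nn_integral_add)
  finally show ?thesis .
qed

lemma nn_integral_set_powr_le_measure_plus:
  fixes w :: "'a::euclidean_space \<Rightarrow> real"
  assumes [measurable]: "w \<in> borel_measurable lborel" and nn: "\<And>x. 0 \<le> w x" and pq: "0 < p" "p \<le> q"
    and \<Omega>: "\<Omega> \<in> sets lborel" "emeasure lborel \<Omega> = ennreal W"
  shows "(\<integral>\<^sup>+x\<in>\<Omega>. ennreal (w x powr p) \<partial>lborel) \<le> ennreal W + (\<integral>\<^sup>+x\<in>\<Omega>. ennreal (w x powr q) \<partial>lborel)"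
proof -
  have "ennreal (w x powr p) * indicator \<Omega> x \<le> indicator \<Omega> x + ennreal (w x powr q) * indicator \<Omega> x" for x
  proof -
    have "ennreal (w x powr p) \<le> ennreal (1 + w x powr q)"
      using powr_le_one_plus_powr[OF nn pq] by (rule ennreal_leI)
    then show ?thesis by (auto split: split_indicator simp: ennreal_plus)
  qed
  then have "(\<integral>\<^sup>+x\<in>\<Omega>. ennreal (w x powr p) \<partial>lborel)
      \<le> (\<integral>\<^sup>+x. indicator \<Omega> x + ennreal (w x powr q) * indicator \<Omega> x \<partial>lborel)"
    by (intro nn_integral_mono)
  also have "\<dots> = ennreal W + (\<integral>\<^sup>+x\<in>\<Omega>. ennreal (w x powr q) \<partial>lborel)"
    using \<Omega> by (simp add: nn_integral_add)
  finally show ?thesis .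
qed

lemma enn2real_set_powr_le_close:
  fixes F G H :: "'a::euclidean_space \<Rightarrow> real"
  assumes meas: "F \<in> borel_measurable lborel" "G \<in> borel_measurable lborel" "H \<in> borel_measurable lborel"
    and le: "\<And>x. F x \<le> G x + H x" and nn: "\<And>x. 0 \<le> F x" "\<And>x. 0 \<le> G x" "\<And>x. 0 \<le> H x"
    and r: "r > 0" and \<Omega>: "\<Omega> \<in> sets lborel"
    and G_fin: "(\<integral>\<^sup>+x\<in>\<Omega>. ennreal (G x powr r) \<partial>lborel) < \<infinity>"
    and H_le: "(\<integral>\<^sup>+x\<in>\<Omega>. ennreal (H x powr r) \<partial>lborel) \<le> ennreal c" and c0: "c \<ge> 0"
  shows "(\<integral>\<^sup>+x\<in>\<Omega>. ennreal (F x powr r) \<partial>lborel) < \<infinity>"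
    and "enn2real (\<integral>\<^sup>+x\<in>\<Omega>. ennreal (F x powr r) \<partial>lborel)
      \<le> 2 powr r * (enn2real (\<integral>\<^sup>+x\<in>\<Omega>. ennreal (G x powr r) \<partial>lborel) + c)"
proof -
  let ?IG = "\<integral>\<^sup>+x\<in>\<Omega>. ennreal (G x powr r) \<partial>lborel"
  have "(\<integral>\<^sup>+x\<in>\<Omega>. ennreal (F x powr r) \<partial>lborel)
      \<le> ennreal (2 powr r) * (?IG + (\<integral>\<^sup>+x\<in>\<Omega>. ennreal (H x powr r) \<partial>lborel))"
    by (rule nn_integral_set_powr_le_sum[OF meas le nn r \<Omega>])
  also have "\<dots> \<le> ennreal (2 powr r) * (ennreal (enn2real ?IG) + ennreal c)"
    using G_fin H_le by (intro mult_left_mono add_mono) (auto simp: less_top)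
  also have "\<dots> = ennreal (2 powr r * (enn2real ?IG + c))"
    using c0 by (simp add: ennreal_mult ennreal_plus)
  finally have le: "(\<integral>\<^sup>+x\<in>\<Omega>. ennreal (F x powr r) \<partial>lborel) \<le> ennreal (2 powr r * (enn2real ?IG + c))" .
  then show "(\<integral>\<^sup>+x\<in>\<Omega>. ennreal (F x powr r) \<partial>lborel) < \<infinity>"
    by (simp add: le_less_trans)
  show "enn2real (\<integral>\<^sup>+x\<in>\<Omega>. ennreal (F x powr r) \<partial>lborel) \<le> 2 powr r * (enn2real ?IG + c)"
    using le c0 by (intro enn2real_leI) auto
qed

section \<open>Test functions\<close>

lemma test_fun_C1:
  assumes "test_fun \<Omega> \<phi>"
  shows "continuous_on UNIV \<phi>" "\<And>x. \<phi> differentiable (at x)" "continuous_on UNIV (cgrad \<phi>)"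
proof -
  have s: "\<forall>k. Ck k \<phi>" using assms unfolding test_fun_def smooth_fun_def by auto
  from s[rule_format, of 0] show "continuous_on UNIV \<phi>" by simp
  from s[rule_format, of 1] have c1: "\<forall>x. \<phi> differentiable (at x)"
    "\<forall>i\<in>Basis. continuous_on UNIV (\<lambda>x. frechet_derivative \<phi> (at x) i)" by auto
  then show "\<And>x. \<phi> differentiable (at x)" by auto
  show "continuous_on UNIV (cgrad \<phi>)" unfolding cgrad_def
    using c1(2) by (intro continuous_intros) auto
qed

lemma frechet_derivative_eq_cgrad_inner:
  assumes "f differentiable (at x)"
  shows "frechet_derivative f (at x) y = cgrad f x \<bullet> y"
proof -
  have lin: "linear (frechet_derivative f (at x))"
    using assms frechet_derivative_works has_derivative_linear by blast
  have "frechet_derivative f (at x) y = frechet_derivative f (at x) (\<Sum>i\<in>Basis. (y \<bullet> i) *\<^sub>R i)"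
    by (simp add: euclidean_representation)
  also have "\<dots> = (\<Sum>i\<in>Basis. (y \<bullet> i) * frechet_derivative f (at x) i)"
    by (simp add: linear_sum[OF lin] linear_cmul[OF lin])
  also have "\<dots> = cgrad f x \<bullet> y"
    unfolding cgrad_def by (simp add: inner_sum_right inner_commute mult.commute)
  finally show ?thesis .
qed

lemma cgrad_eq_0_outside_support:
  assumes "x \<notin> closure {x. f x \<noteq> 0}"
  shows "cgrad f x = 0"
proof -
  have "((\<lambda>_. 0::real) has_derivative (\<lambda>_. 0)) (at x)" by simp
  then have "(f has_derivative (\<lambda>_. 0)) (at x)"
    by (rule has_derivative_transform_within_open[where s="- closure {x. f x \<noteq> 0}"])
      (use assms closure_subset in \<open>auto simp: subset_eq\<close>)
  then have "frechet_derivative f (at x) = (\<lambda>_. 0)"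
    using frechet_derivative_at by metis
  then show ?thesis unfolding cgrad_def by simp
qed

lemma test_fun_bounded:
  fixes \<phi> :: "'a::euclidean_space \<Rightarrow> real"
  assumes "test_fun \<Omega> \<phi>"
  obtains Bf Bg where "\<And>z. \<bar>\<phi> z\<bar> \<le> Bf" "\<And>z. norm (cgrad \<phi> z) \<le> Bg"
    "\<And>x. x \<notin> \<Omega> \<Longrightarrow> \<phi> x = 0" "\<And>x. x \<notin> \<Omega> \<Longrightarrow> cgrad \<phi> x = 0"
proof -
  let ?K = "closure {x. \<phi> x \<noteq> 0}"
  have K: "compact ?K" "?K \<subseteq> \<Omega>" using assms unfolding test_fun_def by auto
  note C1 = test_fun_C1[OF assms]
  have "compact (\<phi> ` ?K)"
    by (rule compact_continuous_image[OF continuous_on_subset[OF C1(1)] K(1)]) simp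
  then obtain Bf where Bf: "\<And>y. y \<in> \<phi> ` ?K \<Longrightarrow> norm y \<le> Bf"
    using compact_imp_bounded bounded_iff by metis
  have "compact (cgrad \<phi> ` ?K)"
    by (rule compact_continuous_image[OF continuous_on_subset[OF C1(3)] K(1)]) simp
  then obtain Bg where Bg: "\<And>y. y \<in> cgrad \<phi> ` ?K \<Longrightarrow> norm y \<le> Bg"
    using compact_imp_bounded bounded_iff by metis
  have out: "\<phi> x = 0 \<and> cgrad \<phi> x = 0" if "x \<notin> ?K" for x
    using that closure_subset[of "{x. \<phi> x \<noteq> 0}"] cgrad_eq_0_outside_support[OF that] by blast
  show ?thesis
  proof
    show "\<bar>\<phi> z\<bar> \<le> max Bf 0" for z
      using Bf[of "\<phi> z"] out[of z] by (cases "z \<in> ?K") simp_all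
    show "norm (cgrad \<phi> z) \<le> max Bg 0" for z
      using Bg[of "cgrad \<phi> z"] out[of z] by (cases "z \<in> ?K") simp_all
    show "\<phi> x = 0" "cgrad \<phi> x = 0" if "x \<notin> \<Omega>" for x
      using out[of x] that K(2) by blast+
  qed
qed

section \<open>Translations and ball averages\<close>

lemma borel_measurable_indicator_snd_mult:
  fixes F :: "'a::euclidean_space \<times> 'b::euclidean_space \<Rightarrow> real"
  assumes "continuous_on UNIV F" "closed S"
  shows "(\<lambda>p. ennreal (indicator S (snd p) * F p)) \<in> borel_measurable borel"
proof -
  have "(\<lambda>p::'a\<times>'b. indicator (UNIV \<times> S) p * F p) \<in> borel_measurable borel"
    using assms by (intro borel_measurable_times borel_measurable_indicator borel_closed closed_Times
        borel_measurable_continuous_onI) auto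
  moreover have "(\<lambda>p::'a\<times>'b. indicator (UNIV \<times> S) p :: real) = (\<lambda>p. indicator S (snd p))"
    by (auto simp: fun_eq_iff split: split_indicator)
  ultimately show ?thesis by (simp add: measurable_compose[OF _ measurable_ennreal])
qed

lemma nn_integral_lborel_translate:
  fixes f :: "'a::euclidean_space \<Rightarrow> ennreal"
  assumes "f \<in> borel_measurable borel"
  shows "(\<integral>\<^sup>+x. f (x + c) \<partial>lborel) = (\<integral>\<^sup>+x. f x \<partial>lborel)"
proof -
  have "(\<integral>\<^sup>+x. f x \<partial>lborel) = (\<integral>\<^sup>+x. f x \<partial>(distr lborel borel ((+) c)))"
    by (simp add: lborel_distr_plus)
  also have "\<dots> = (\<integral>\<^sup>+x. f (c + x) \<partial>lborel)"
    by (rule nn_integral_distr) (use assms in auto)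
  finally show ?thesis by (simp add: add.commute)
qed

lemma nn_integral_lborel_Fubini:
  fixes H :: "'a::euclidean_space \<Rightarrow> 'b::euclidean_space \<Rightarrow> ennreal"
  assumes "(\<lambda>p. H (fst p) (snd p)) \<in> borel_measurable borel"
  shows "(\<integral>\<^sup>+x. (\<integral>\<^sup>+t. H x t \<partial>lborel) \<partial>lborel) = (\<integral>\<^sup>+t. (\<integral>\<^sup>+x. H x t \<partial>lborel) \<partial>lborel)"
proof -
  have "case_prod H \<in> borel_measurable (lborel \<Otimes>\<^sub>M lborel)"
    using assms by (simp add: lborel_prod case_prod_beta')
  then show ?thesis by (rule lborel_pair.Fubini'[symmetric])
qed

lemma abs_diff_le_segment_integral_cgrad:
  fixes \<phi> :: "'a::euclidean_space \<Rightarrow> real"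
  assumes diff: "\<And>z. \<phi> differentiable (at z)" and cont: "continuous_on UNIV (cgrad \<phi>)"
  shows "\<bar>\<phi> (x + y) - \<phi> x\<bar>
    \<le> norm y * (\<integral>t. indicator {0..1::real} t * norm (cgrad \<phi> (x + t *\<^sub>R y)) \<partial>lborel)"
proof -
  define f where "f t = cgrad \<phi> (x + t *\<^sub>R y) \<bullet> y" for t :: real
  have cc: "continuous_on UNIV (\<lambda>t::real. cgrad \<phi> (x + t *\<^sub>R y))"
    by (rule continuous_on_compose2[OF cont]) (auto intro!: continuous_intros)
  have cf: "continuous_on {0..1} f"
    unfolding f_def by (intro continuous_on_inner continuous_on_subset[OF cc] continuous_on_const) simp
  have "((\<lambda>t. \<phi> (x + t *\<^sub>R y)) has_vector_derivative f t) (at t within {0..1})" for t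
  proof -
    have "((\<lambda>t. x + t *\<^sub>R y) has_derivative (\<lambda>s. s *\<^sub>R y)) (at t within {0..1})"
      by (rule derivative_eq_intros refl)+ simp
    from has_derivative_compose[OF this frechet_derivative_works[THEN iffD1, OF diff]]
    show ?thesis
      unfolding has_vector_derivative_def f_def
      by (simp add: frechet_derivative_eq_cgrad_inner[OF diff])
  qed
  then have "(\<integral>t. indicator {0..1} t *\<^sub>R f t \<partial>lborel) = \<phi> (x + y) - \<phi> x"
    by (subst integral_FTC_atLeastAtMost) (use cf in auto)
  then have "\<bar>\<phi> (x + y) - \<phi> x\<bar> \<le> (\<integral>t. norm (indicator {0..1::real} t *\<^sub>R f t) \<partial>lborel)"
    using integral_norm_bound[of lborel "\<lambda>t. indicator {0..1::real} t *\<^sub>R f t"] by simp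
  also have "\<dots> \<le> (\<integral>t. norm y * (indicator {0..1::real} t *\<^sub>R norm (cgrad \<phi> (x + t *\<^sub>R y))) \<partial>lborel)"
  proof (rule integral_mono)
    show "integrable lborel (\<lambda>t. norm (indicator {0..1::real} t *\<^sub>R f t))"
      by (rule integrable_norm, rule borel_integrable_compact) (use cf in auto)
    show "integrable lborel (\<lambda>t. norm y * (indicator {0..1::real} t *\<^sub>R norm (cgrad \<phi> (x + t *\<^sub>R y))))"
      by (rule integrable_mult_right, rule borel_integrable_compact)
        (use continuous_on_subset[OF continuous_on_norm[OF cc]] in auto)
    show "norm (indicator {0..1::real} t *\<^sub>R f t)
        \<le> norm y * (indicator {0..1::real} t *\<^sub>R norm (cgrad \<phi> (x + t *\<^sub>R y)))" for t
      unfolding f_def using Cauchy_Schwarz_ineq2[of "cgrad \<phi> (x + t *\<^sub>R y)" y]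
      by (auto split: split_indicator simp: mult.commute)
  qed
  finally show ?thesis by simp
qed

lemma nn_integral_segment_cgrad_powr:
  fixes \<phi> :: "'a::euclidean_space \<Rightarrow> real"
  assumes cont: "continuous_on UNIV (cgrad \<phi>)" and r: "r > 0"
  shows "(\<integral>\<^sup>+x. (\<integral>\<^sup>+t. ennreal (indicator {0..1::real} t * norm (cgrad \<phi> (x + t *\<^sub>R y)) powr r) \<partial>lborel) \<partial>lborel)
     = (\<integral>\<^sup>+x. ennreal (norm (cgrad \<phi> x) powr r) \<partial>lborel)"
proof -
  have cp: "continuous_on UNIV (\<lambda>p::'a\<times>real. norm (cgrad \<phi> (fst p + snd p *\<^sub>R y)) powr r)"
    using r by (intro continuous_on_powr' continuous_on_norm continuous_on_compose2[OF cont])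
      (auto intro!: continuous_intros)
  have mG: "(\<lambda>x. ennreal (norm (cgrad \<phi> x) powr r)) \<in> borel_measurable borel"
    using r by (intro measurable_compose[OF _ measurable_ennreal] borel_measurable_continuous_onI
        continuous_on_powr' continuous_on_norm cont continuous_on_const) auto
  have "(\<integral>\<^sup>+x. (\<integral>\<^sup>+t. ennreal (indicator {0..1::real} t * norm (cgrad \<phi> (x + t *\<^sub>R y)) powr r) \<partial>lborel) \<partial>lborel)
      = (\<integral>\<^sup>+t. (\<integral>\<^sup>+x. ennreal (indicator {0..1::real} t * norm (cgrad \<phi> (x + t *\<^sub>R y)) powr r) \<partial>lborel) \<partial>lborel)"
    using borel_measurable_indicator_snd_mult[OF cp, of "{0..1}"] by (intro nn_integral_lborel_Fubini) auto
  also have "\<dots> = (\<integral>\<^sup>+t. indicator {0..1::real} t * (\<integral>\<^sup>+x. ennreal (norm (cgrad \<phi> x) powr r) \<partial>lborel) \<partial>lborel)"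
  proof (rule nn_integral_cong)
    fix t :: real
    have "(\<integral>\<^sup>+x. ennreal (indicator {0..1::real} t * norm (cgrad \<phi> (x + t *\<^sub>R y)) powr r) \<partial>lborel)
       = indicator {0..1::real} t * (\<integral>\<^sup>+x. ennreal (norm (cgrad \<phi> (x + t *\<^sub>R y)) powr r) \<partial>lborel)"
      using mG by (subst nn_integral_cmult[symmetric])
        (auto intro!: nn_integral_cong measurable_compose[OF _ mG] split: split_indicator)
    then show "(\<integral>\<^sup>+x. ennreal (indicator {0..1::real} t * norm (cgrad \<phi> (x + t *\<^sub>R y)) powr r) \<partial>lborel) =
         indicator {0..1::real} t * (\<integral>\<^sup>+x. ennreal (norm (cgrad \<phi> x) powr r) \<partial>lborel)"
      using nn_integral_lborel_translate[OF mG, of "t *\<^sub>R y"] by simp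
  qed
  also have "\<dots> = (\<integral>\<^sup>+x. ennreal (norm (cgrad \<phi> x) powr r) \<partial>lborel)"
    by (subst mult.commute, subst nn_integral_cmult_indicator) auto
  finally show ?thesis .
qed

lemma abs_diff_powr_le_segment_nn_integral:
  fixes \<phi> :: "'a::euclidean_space \<Rightarrow> real"
  assumes diff: "\<And>z. \<phi> differentiable (at z)" and cont: "continuous_on UNIV (cgrad \<phi>)"
    and Bg: "\<And>z. norm (cgrad \<phi> z) \<le> Bg" and q: "q \<ge> 1"
  shows "ennreal (\<bar>\<phi> (x + y) - \<phi> x\<bar> powr q) \<le> ennreal (norm y powr q)
    * (\<integral>\<^sup>+t. ennreal (indicator {0..1::real} t * norm (cgrad \<phi> (x + t *\<^sub>R y)) powr q) \<partial>lborel)"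
proof -
  let ?J = "\<integral>\<^sup>+t. ennreal (indicator {0..1::real} t * norm (cgrad \<phi> (x + t *\<^sub>R y)) powr q) \<partial>lborel"
  define S where "S = (\<integral>t. indicator {0..1::real} t * norm (cgrad \<phi> (x + t *\<^sub>R y)) \<partial>lborel)"
  have cx: "continuous_on UNIV (\<lambda>t::real. norm (cgrad \<phi> (x + t *\<^sub>R y)))"
    by (intro continuous_on_norm continuous_on_compose2[OF cont]) (auto intro!: continuous_intros)
  have S0: "S \<ge> 0" unfolding S_def by (rule integral_nonneg_AE) auto
  have "(\<integral>\<^sup>+t. ennreal (indicator {0..1::real} t * norm (cgrad \<phi> (x + t *\<^sub>R y))) \<partial>lborel) = ennreal S"
    unfolding S_def
    using borel_integrable_compact[OF compact_Icc continuous_on_subset[OF cx]]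
    by (intro nn_integral_eq_integral) auto
  then have SJ: "S powr q \<le> enn2real ?J"
    using nn_integral_powr_mean[of "{0..1::real}" 1 "\<lambda>t. norm (cgrad \<phi> (x + t *\<^sub>R y))" Bg q]
      S0 q Bg borel_measurable_continuous_onI[OF cx] by simp
  have "?J < \<infinity>"
    using Bg q by (intro nn_integral_indicator_less_top[of _ 1 _ "Bg powr q"] powr_mono2) (auto intro: order_trans)
  then have J: "ennreal (enn2real ?J) = ?J" by simp
  have "\<bar>\<phi> (x + y) - \<phi> x\<bar> powr q \<le> (norm y * S) powr q"
    unfolding S_def using q abs_diff_le_segment_integral_cgrad[OF diff cont] by (intro powr_mono2) auto
  also have "\<dots> \<le> norm y powr q * enn2real ?J"
    using S0 SJ by (simp add: powr_mult mult_left_mono)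
  finally have "ennreal (\<bar>\<phi> (x + y) - \<phi> x\<bar> powr q) \<le> ennreal (norm y powr q * enn2real ?J)"
    by (rule ennreal_leI)
  also have "\<dots> = ennreal (norm y powr q) * ?J"
    by (subst ennreal_mult) (simp_all only: J enn2real_nonneg powr_ge_zero)
  finally show ?thesis .
qed

lemma nn_integral_translate_diff_powr_le:
  fixes \<phi> :: "'a::euclidean_space \<Rightarrow> real"
  assumes diff: "\<And>z. \<phi> differentiable (at z)" and cont: "continuous_on UNIV (cgrad \<phi>)"
    and Bg: "\<And>z. norm (cgrad \<phi> z) \<le> Bg" and q: "q \<ge> 1"
  shows "(\<integral>\<^sup>+x. ennreal (\<bar>\<phi> (x + y) - \<phi> x\<bar> powr q) \<partial>lborel)
     \<le> ennreal (norm y powr q) * (\<integral>\<^sup>+x. ennreal (norm (cgrad \<phi> x) powr q) \<partial>lborel)"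
proof -
  define J where
    "J x = (\<integral>\<^sup>+t. ennreal (indicator {0..1::real} t * norm (cgrad \<phi> (x + t *\<^sub>R y)) powr q) \<partial>lborel)" for x
  have mJ: "J \<in> borel_measurable lborel"
    unfolding J_def
  proof (rule lborel.borel_measurable_nn_integral)
    have "continuous_on UNIV (\<lambda>p::'a\<times>real. norm (cgrad \<phi> (fst p + snd p *\<^sub>R y)) powr q)"
      using q by (intro continuous_on_powr' continuous_on_norm continuous_on_const
          continuous_on_compose2[OF cont]) (auto intro!: continuous_intros)
    from borel_measurable_indicator_snd_mult[OF this, of "{0..1}"]
    show "(\<lambda>(x, t). ennreal (indicator {0..1::real} t * norm (cgrad \<phi> (x + t *\<^sub>R y)) powr q))
        \<in> borel_measurable (lborel \<Otimes>\<^sub>M lborel)"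
      by (simp add: lborel_prod case_prod_beta')
  qed
  have "(\<integral>\<^sup>+x. ennreal (\<bar>\<phi> (x + y) - \<phi> x\<bar> powr q) \<partial>lborel) \<le> (\<integral>\<^sup>+x. ennreal (norm y powr q) * J x \<partial>lborel)"
    unfolding J_def by (intro nn_integral_mono abs_diff_powr_le_segment_nn_integral[OF diff cont Bg q])
  also have "\<dots> = ennreal (norm y powr q) * (\<integral>\<^sup>+x. J x \<partial>lborel)"
    by (rule nn_integral_cmult[OF mJ])
  also have "(\<integral>\<^sup>+x. J x \<partial>lborel) = (\<integral>\<^sup>+x. ennreal (norm (cgrad \<phi> x) powr q) \<partial>lborel)"
    unfolding J_def using q by (intro nn_integral_segment_cgrad_powr[OF cont]) simp
  finally show ?thesis .
qed

definition ball_average :: "real \<Rightarrow> ('a::euclidean_space \<Rightarrow> real) \<Rightarrow> 'a \<Rightarrow> real" where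
  "ball_average h \<phi> x = (\<integral>y. indicator (cball 0 h) y * \<phi> (x + y) \<partial>lborel) / measure lborel (cball (0::'a) h)"

lemma measure_cball_pos:
  assumes "h > 0"
  shows "emeasure lborel (cball (0::'a::euclidean_space) h) = ennreal (measure lborel (cball (0::'a) h))"
    and "measure lborel (cball (0::'a) h) > 0"
proof -
  show "emeasure lborel (cball (0::'a) h) = ennreal (measure lborel (cball (0::'a) h))"
    using emeasure_lborel_cball_finite[of "0::'a" h] by (intro emeasure_eq_ennreal_measure) simp
  have "measure lborel (cball (0::'a) h) = unit_ball_vol (DIM('a)) * h ^ DIM('a)"
    unfolding measure_def using assms by (simp add: emeasure_cball)
  then show "measure lborel (cball (0::'a) h) > 0" using assms by simp
qed

lemma borel_measurable_ball_average:
  fixes \<phi> :: "'a::euclidean_space \<Rightarrow> real"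
  assumes contf: "continuous_on UNIV \<phi>"
  shows "ball_average h \<phi> \<in> borel_measurable lborel"
proof -
  have "continuous_on UNIV (\<lambda>p::'a\<times>'a. \<phi> (fst p + snd p))"
    by (rule continuous_on_compose2[OF contf]) (auto intro!: continuous_intros)
  then have "(\<lambda>p::'a\<times>'a. indicator (UNIV \<times> cball 0 h) p * \<phi> (fst p + snd p)) \<in> borel_measurable borel"
    by (intro borel_measurable_times borel_measurable_continuous_onI borel_measurable_indicator
        borel_closed closed_Times) auto
  moreover have "(\<lambda>p::'a\<times>'a. indicator (UNIV \<times> cball 0 h) p :: real) = (\<lambda>p. indicator (cball 0 h) (snd p))"
    by (auto simp: fun_eq_iff split: split_indicator)
  ultimately have "(\<lambda>(x,y). indicator (cball 0 h) y * \<phi> (x + y)) \<in> borel_measurable (lborel \<Otimes>\<^sub>M lborel)"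
    by (simp add: lborel_prod case_prod_beta')
  then have "(\<lambda>x. \<integral>y. indicator (cball 0 h) y * \<phi> (x + y) \<partial>lborel) \<in> borel_measurable lborel"
    by (rule lborel.borel_measurable_lebesgue_integral)
  then show ?thesis unfolding ball_average_def by measurable
qed

lemma abs_ball_average_le:
  fixes \<phi> :: "'a::euclidean_space \<Rightarrow> real"
  assumes contf: "continuous_on UNIV \<phi>" and h: "h > 0"
    and fin: "(\<integral>\<^sup>+x. ennreal \<bar>\<phi> x\<bar> \<partial>lborel) < \<infinity>"
  shows "\<bar>ball_average h \<phi> x\<bar>
    \<le> enn2real (\<integral>\<^sup>+x. ennreal \<bar>\<phi> x\<bar> \<partial>lborel) / measure lborel (cball (0::'a) h)"
proof -
  have "continuous_on UNIV (\<lambda>y. \<phi> (x + y))"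
    by (rule continuous_on_compose2[OF contf]) (auto intro!: continuous_intros)
  then have cy: "continuous_on UNIV (\<lambda>y. \<bar>\<phi> (x + y)\<bar>)"
    by (rule continuous_on_rabs)
  have mt: "(\<lambda>y. ennreal \<bar>\<phi> y\<bar>) \<in> borel_measurable borel"
    by (rule measurable_compose[OF _ measurable_ennreal]) (intro borel_measurable_continuous_onI
        continuous_on_rabs contf)
  have tr: "(\<integral>\<^sup>+y. ennreal \<bar>\<phi> (x + y)\<bar> \<partial>lborel) = (\<integral>\<^sup>+x. ennreal \<bar>\<phi> x\<bar> \<partial>lborel)"
    using nn_integral_lborel_translate[OF mt, of x] by (simp add: add.commute)
  have "\<bar>\<integral>y. indicator (cball 0 h) y * \<phi> (x + y) \<partial>lborel\<bar>
      \<le> (\<integral>y. norm (indicator (cball 0 h) y * \<phi> (x + y)) \<partial>lborel)"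
    using integral_norm_bound[of lborel "\<lambda>y. indicator (cball 0 h) y * \<phi> (x + y)"] by simp
  also have "\<dots> = enn2real (\<integral>\<^sup>+y. ennreal (indicator (cball 0 h) y * \<bar>\<phi> (x + y)\<bar>) \<partial>lborel)"
    using borel_integrable_compact[OF compact_cball continuous_on_subset[OF cy subset_UNIV]]
    by (subst nn_integral_eq_integral)
      (auto intro!: integral_nonneg_AE Bochner_Integration.integral_cong split: split_indicator)
  also have "\<dots> \<le> enn2real (\<integral>\<^sup>+y. ennreal \<bar>\<phi> (x + y)\<bar> \<partial>lborel)"
  proof (rule enn2real_mono)
    show "(\<integral>\<^sup>+y. ennreal (indicator (cball 0 h) y * \<bar>\<phi> (x + y)\<bar>) \<partial>lborel)
        \<le> (\<integral>\<^sup>+y. ennreal \<bar>\<phi> (x + y)\<bar> \<partial>lborel)"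
      by (intro nn_integral_mono) (auto split: split_indicator)
  qed (use tr fin in simp)
  finally show ?thesis
    unfolding ball_average_def tr using measure_cball_pos[OF h] by (simp add: divide_right_mono)
qed

lemma abs_sub_ball_average_le:
  fixes \<phi> :: "'a::euclidean_space \<Rightarrow> real"
  assumes contf: "continuous_on UNIV \<phi>" and h: "h > 0"
  shows "\<bar>\<phi> x - ball_average h \<phi> x\<bar>
    \<le> (\<integral>y. indicator (cball 0 h) y * \<bar>\<phi> (x + y) - \<phi> x\<bar> \<partial>lborel) / measure lborel (cball (0::'a) h)"
proof -
  let ?B = "cball (0::'a) h"
  define m where "m = measure lborel ?B"
  have m0: "m > 0" unfolding m_def using measure_cball_pos[OF h] by auto
  have cy: "continuous_on UNIV (\<lambda>y. \<phi> (x + y))"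
    by (rule continuous_on_compose2[OF contf]) (auto intro!: continuous_intros)
  have int1: "integrable lborel (\<lambda>y. indicator ?B y * \<phi> (x + y))"
    using borel_integrable_compact[OF compact_cball continuous_on_subset[OF cy subset_UNIV]] by simp
  have int2: "integrable lborel (\<lambda>y. indicator ?B y * \<phi> x)"
    using emeasure_lborel_cball_finite[of "0::'a" h]
    by (intro integrable_mult_left integrable_real_indicator) auto
  have i2: "(\<integral>y. indicator ?B y * \<phi> x \<partial>lborel) = m * \<phi> x"
    unfolding m_def by simp
  have "\<phi> x - ball_average h \<phi> x = (m * \<phi> x - (\<integral>y. indicator ?B y * \<phi> (x + y) \<partial>lborel)) / m"
    unfolding ball_average_def m_def[symmetric] using m0 by (simp add: field_simps)
  also have "\<dots> = (\<integral>y. indicator ?B y * (\<phi> x - \<phi> (x + y)) \<partial>lborel) / m"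
    unfolding i2[symmetric] using int1 int2
    by (simp add: Bochner_Integration.integral_diff[symmetric] algebra_simps)
  finally have "\<bar>\<phi> x - ball_average h \<phi> x\<bar> = \<bar>\<integral>y. indicator ?B y * (\<phi> x - \<phi> (x + y)) \<partial>lborel\<bar> / m"
    using m0 by simp
  also have "\<dots> \<le> (\<integral>y. indicator ?B y * \<bar>\<phi> (x + y) - \<phi> x\<bar> \<partial>lborel) / m"
    using integral_norm_bound[of lborel "\<lambda>y. indicator ?B y * (\<phi> x - \<phi> (x + y))"] m0
    by (intro divide_right_mono) (simp_all add: abs_mult abs_minus_commute)
  finally show ?thesis unfolding m_def .
qed

lemma ball_average_error_powr_le:
  fixes \<phi> :: "'a::euclidean_space \<Rightarrow> real"
  assumes contf: "continuous_on UNIV \<phi>" and Bf: "\<And>z. \<bar>\<phi> z\<bar> \<le> Bf" and q: "q \<ge> 1" and h: "h > 0"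
  defines "m \<equiv> measure lborel (cball (0::'a) h)"
  shows "ennreal (\<bar>\<phi> x - ball_average h \<phi> x\<bar> powr q)
    \<le> ennreal (1/m) * (\<integral>\<^sup>+y. ennreal (indicator (cball 0 h) y * \<bar>\<phi> (x + y) - \<phi> x\<bar> powr q) \<partial>lborel)"
proof -
  let ?B = "cball (0::'a) h"
  let ?I = "\<integral>\<^sup>+y. ennreal (indicator ?B y * \<bar>\<phi> (x + y) - \<phi> x\<bar> powr q) \<partial>lborel"
  have eB: "emeasure lborel ?B = ennreal m" and m0: "m > 0"
    unfolding m_def using measure_cball_pos[OF h] by auto
  have cD: "continuous_on UNIV (\<lambda>y. \<bar>\<phi> (x + y) - \<phi> x\<bar>)"
    by (intro continuous_intros continuous_on_compose2[OF contf]) (auto intro!: continuous_intros)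
  have bnd: "\<bar>\<phi> (x + y) - \<phi> x\<bar> \<le> 2 * Bf" for y
    using Bf[of "x+y"] Bf[of x] by linarith
  define T where "T = (\<integral>y. indicator ?B y * \<bar>\<phi> (x + y) - \<phi> x\<bar> \<partial>lborel)"
  have T0: "T \<ge> 0" unfolding T_def by (rule integral_nonneg_AE) auto
  have "(\<integral>\<^sup>+y. ennreal (indicator ?B y * \<bar>\<phi> (x + y) - \<phi> x\<bar>) \<partial>lborel) = ennreal T"
    unfolding T_def using borel_integrable_compact[OF compact_cball continuous_on_subset[OF cD subset_UNIV]]
    by (intro nn_integral_eq_integral) auto
  then have TI: "T powr q \<le> m powr (q-1) * enn2real ?I"
    using nn_integral_powr_mean[of ?B m "\<lambda>y. \<bar>\<phi> (x + y) - \<phi> x\<bar>" "2 * Bf" q] eB m0 q bnd T0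
      borel_measurable_continuous_onI[OF cD]
    by simp
  have "\<bar>\<phi> x - ball_average h \<phi> x\<bar> powr q \<le> (T / m) powr q"
    using abs_sub_ball_average_le[OF contf h, of x] q unfolding T_def m_def by (intro powr_mono2) auto
  also have "\<dots> = T powr q / m powr q" using T0 m0 by (simp add: powr_divide)
  also have "\<dots> \<le> m powr (q-1) * enn2real ?I / m powr q"
    using TI m0 by (intro divide_right_mono) auto
  also have "\<dots> = (1/m) * enn2real ?I"
    using m0 by (simp add: powr_diff)
  finally have le: "\<bar>\<phi> x - ball_average h \<phi> x\<bar> powr q \<le> (1/m) * enn2real ?I" .
  have "?I < \<infinity>"
    using bnd q by (intro nn_integral_indicator_less_top[OF eB, of _ "(2 * Bf) powr q"] powr_mono2) auto
  then have "ennreal (enn2real ?I) = ?I" by simp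
  then have "ennreal ((1/m) * enn2real ?I) = ennreal (1/m) * ?I"
    using m0 by (subst ennreal_mult) auto
  then show ?thesis
    using ennreal_leI[OF le] by simp
qed

lemma nn_integral_indicator_translate_diff_powr_le:
  fixes \<phi> :: "'a::euclidean_space \<Rightarrow> real"
  assumes diff: "\<And>z. \<phi> differentiable (at z)" and cont: "continuous_on UNIV (cgrad \<phi>)"
    and Bg: "\<And>z. norm (cgrad \<phi> z) \<le> Bg" and q: "q \<ge> 1"
  shows "(\<integral>\<^sup>+x. ennreal (indicator (cball 0 h) y * \<bar>\<phi> (x + y) - \<phi> x\<bar> powr q) \<partial>lborel)
     \<le> (ennreal (h powr q) * (\<integral>\<^sup>+x. ennreal (norm (cgrad \<phi> x) powr q) \<partial>lborel)) * indicator (cball 0 h) y"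
proof (cases "y \<in> cball 0 h")
  case True
  have "(\<integral>\<^sup>+x. ennreal (\<bar>\<phi> (x + y) - \<phi> x\<bar> powr q) \<partial>lborel)
      \<le> ennreal (norm y powr q) * (\<integral>\<^sup>+x. ennreal (norm (cgrad \<phi> x) powr q) \<partial>lborel)"
    by (rule nn_integral_translate_diff_powr_le[OF diff cont Bg q])
  also have "\<dots> \<le> ennreal (h powr q) * (\<integral>\<^sup>+x. ennreal (norm (cgrad \<phi> x) powr q) \<partial>lborel)"
    using True q by (intro mult_right_mono ennreal_leI powr_mono2) auto
  finally show ?thesis using True by simp
qed simp

lemma nn_integral_ball_average_error_le:
  fixes \<phi> :: "'a::euclidean_space \<Rightarrow> real"
  assumes diff: "\<And>z. \<phi> differentiable (at z)" and cont: "continuous_on UNIV (cgrad \<phi>)"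
    and contf: "continuous_on UNIV \<phi>"
    and Bf: "\<And>z. \<bar>\<phi> z\<bar> \<le> Bf" and Bg: "\<And>z. norm (cgrad \<phi> z) \<le> Bg" and q: "q \<ge> 1" and h: "h > 0"
  shows "(\<integral>\<^sup>+x. ennreal (\<bar>\<phi> x - ball_average h \<phi> x\<bar> powr q) \<partial>lborel)
     \<le> ennreal (h powr q) * (\<integral>\<^sup>+x. ennreal (norm (cgrad \<phi> x) powr q) \<partial>lborel)"
proof -
  let ?B = "cball (0::'a) h"
  let ?G = "\<integral>\<^sup>+x. ennreal (norm (cgrad \<phi> x) powr q) \<partial>lborel"
  define m where "m = measure lborel ?B"
  have eB: "emeasure lborel ?B = ennreal m" and m0: "m > 0"
    unfolding m_def using measure_cball_pos[OF h] by auto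
  define H where "H x y = ennreal (indicator ?B y * \<bar>\<phi> (x + y) - \<phi> x\<bar> powr q)" for x y
  have cF: "continuous_on UNIV (\<lambda>p::'a\<times>'a. \<bar>\<phi> (fst p + snd p) - \<phi> (fst p)\<bar> powr q)"
    using q by (intro continuous_on_powr' continuous_on_rabs continuous_on_diff continuous_on_const
        continuous_on_compose2[OF contf]) (auto intro!: continuous_intros)
  have mH: "(\<lambda>p. H (fst p) (snd p)) \<in> borel_measurable borel"
    unfolding H_def using borel_measurable_indicator_snd_mult[OF cF, of ?B] by simp
  have "(\<integral>\<^sup>+x. ennreal (\<bar>\<phi> x - ball_average h \<phi> x\<bar> powr q) \<partial>lborel)
      \<le> (\<integral>\<^sup>+x. ennreal (1/m) * (\<integral>\<^sup>+y. H x y \<partial>lborel) \<partial>lborel)"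
    unfolding H_def m_def by (intro nn_integral_mono ball_average_error_powr_le[OF contf Bf q h])
  also have "\<dots> = ennreal (1/m) * (\<integral>\<^sup>+x. (\<integral>\<^sup>+y. H x y \<partial>lborel) \<partial>lborel)"
    by (rule nn_integral_cmult, rule lborel.borel_measurable_nn_integral)
      (use mH in \<open>simp add: lborel_prod case_prod_beta'\<close>)
  also have "\<dots> = ennreal (1/m) * (\<integral>\<^sup>+y. (\<integral>\<^sup>+x. H x y \<partial>lborel) \<partial>lborel)"
    by (simp only: nn_integral_lborel_Fubini[OF mH])
  also have "\<dots> \<le> ennreal (1/m) * (\<integral>\<^sup>+y. (ennreal (h powr q) * ?G) * indicator ?B y \<partial>lborel)"
    unfolding H_def
    by (intro mult_left_mono nn_integral_mono nn_integral_indicator_translate_diff_powr_le[OF diff cont Bg q]) simp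
  also have "\<dots> = ennreal (1/m) * ((ennreal (h powr q) * ?G) * ennreal m)"
    by (subst nn_integral_cmult_indicator) (auto simp: eB)
  finally have "(\<integral>\<^sup>+x. ennreal (\<bar>\<phi> x - ball_average h \<phi> x\<bar> powr q) \<partial>lborel)
      \<le> (ennreal (1/m) * ennreal m) * (ennreal (h powr q) * ?G)"
    by (simp add: mult_ac)
  also have "ennreal (1/m) * ennreal m = 1" using m0 by (simp flip: ennreal_mult)
  finally show ?thesis by simp
qed

section \<open>An interpolation inequality\<close>

text \<open>Translating by a vector of length \<open>2 * R\<close> moves the support of \<open>\<phi>\<close> off itself,
  so \<open>\<bar>\<phi> x\<bar> \<le> \<bar>\<phi> (x + y) - \<phi> x\<bar>\<close> everywhere.\<close>
lemma nn_integral_abs_le_cgrad: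
  fixes \<phi> :: "'a::euclidean_space \<Rightarrow> real"
  assumes diff: "\<And>z. \<phi> differentiable (at z)" and cont: "continuous_on UNIV (cgrad \<phi>)"
    and Bg: "\<And>z. norm (cgrad \<phi> z) \<le> Bg"
    and vanish: "\<And>x. x \<notin> \<Omega> \<Longrightarrow> \<phi> x = 0" and R: "\<Omega> \<subseteq> ball 0 R" "R > 0"
  shows "(\<integral>\<^sup>+x. ennreal \<bar>\<phi> x\<bar> \<partial>lborel) \<le> ennreal (2 * R) * (\<integral>\<^sup>+x. ennreal (norm (cgrad \<phi> x)) \<partial>lborel)"
proof -
  obtain e :: 'a where e: "e \<in> Basis" using nonempty_Basis by blast
  define y where "y = (2 * R) *\<^sub>R e"
  have ny: "norm y = 2 * R" unfolding y_def using e R by simp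
  have "\<bar>\<phi> x\<bar> \<le> \<bar>\<phi> (x + y) - \<phi> x\<bar> powr 1" for x
  proof (cases "x \<in> \<Omega>")
    case True
    then have "norm x < R" using R by auto
    moreover have "norm y \<le> norm (x + y) + norm x"
      using norm_triangle_ineq4[of "x + y" x] by simp
    ultimately have "x + y \<notin> \<Omega>" using ny R by auto
    then show ?thesis using vanish by simp
  qed (simp add: vanish)
  then have "(\<integral>\<^sup>+x. ennreal \<bar>\<phi> x\<bar> \<partial>lborel) \<le> (\<integral>\<^sup>+x. ennreal (\<bar>\<phi> (x + y) - \<phi> x\<bar> powr 1) \<partial>lborel)"
    by (intro nn_integral_mono ennreal_leI)
  also have "\<dots> \<le> ennreal (norm y powr 1) * (\<integral>\<^sup>+x. ennreal (norm (cgrad \<phi> x) powr 1) \<partial>lborel)"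
    by (rule nn_integral_translate_diff_powr_le[OF diff cont Bg]) simp
  finally show ?thesis using ny R by simp
qed

lemma Lq_int_le_ball_average_split:
  fixes \<phi> :: "'a::euclidean_space \<Rightarrow> real"
  assumes diff: "\<And>z. \<phi> differentiable (at z)" and cont: "continuous_on UNIV (cgrad \<phi>)"
    and contf: "continuous_on UNIV \<phi>"
    and Bf: "\<And>z. \<bar>\<phi> z\<bar> \<le> Bf" and Bg: "\<And>z. norm (cgrad \<phi> z) \<le> Bg"
    and vanish: "\<And>x. x \<notin> \<Omega> \<Longrightarrow> cgrad \<phi> x = 0"
    and \<Omega>: "\<Omega> \<in> sets lborel" "emeasure lborel \<Omega> = ennreal W" "W \<ge> 0"
    and q: "q \<ge> 1" and h: "h > 0" and avg: "\<And>x. \<bar>ball_average h \<phi> x\<bar> \<le> a"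
  shows "Lq_int q \<Omega> \<phi> \<le> 2 powr q * (h powr q * Lq_int_vec q \<Omega> (cgrad \<phi>) + W * a powr q)"
proof -
  let ?A = "ball_average h \<phi>"
  have a0: "a \<ge> 0" using avg[of 0] by simp
  have Bg0: "Bg \<ge> 0" using Bg[of 0] norm_ge_zero[of "cgrad \<phi> 0"] by linarith
  have eIq: "(\<integral>\<^sup>+x. ennreal (norm (cgrad \<phi> x) powr q) \<partial>lborel) = ennreal (Lq_int_vec q \<Omega> (cgrad \<phi>))"
    unfolding Lq_int_vec_def using Bg Bg0 q vanish
    by (intro nn_integral_vanishing_bounded_eq_ennreal[OF \<Omega>(1,2), of _ "Bg powr q"] powr_mono2) auto
  have mA: "?A \<in> borel_measurable lborel" by (rule borel_measurable_ball_average[OF contf])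
  have mf: "\<phi> \<in> borel_measurable lborel"
    using borel_measurable_continuous_onI[OF contf] by simp
  have pw: "ennreal (\<bar>\<phi> x\<bar> powr q) * indicator \<Omega> x
      \<le> ennreal (2 powr q) * (ennreal (\<bar>\<phi> x - ?A x\<bar> powr q) + ennreal (a powr q) * indicator \<Omega> x)" for x
  proof (cases "x \<in> \<Omega>")
    case True
    have "\<bar>\<phi> x\<bar> powr q \<le> (\<bar>\<phi> x - ?A x\<bar> + \<bar>?A x\<bar>) powr q" using q by (intro powr_mono2) auto
    also have "\<dots> \<le> 2 powr q * (\<bar>\<phi> x - ?A x\<bar> powr q + \<bar>?A x\<bar> powr q)"
      using q by (intro powr_add_le_two_powr) auto
    also have "\<dots> \<le> 2 powr q * (\<bar>\<phi> x - ?A x\<bar> powr q + a powr q)"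
      using avg[of x] q by (intro mult_left_mono add_left_mono powr_mono2) auto
    finally show ?thesis using True a0
      by (simp add: ennreal_leI flip: ennreal_mult ennreal_plus)
  qed simp
  have "(\<integral>\<^sup>+x\<in>\<Omega>. ennreal (\<bar>\<phi> x\<bar> powr q) \<partial>lborel)
       \<le> (\<integral>\<^sup>+x. ennreal (2 powr q) * (ennreal (\<bar>\<phi> x - ?A x\<bar> powr q) + ennreal (a powr q) * indicator \<Omega> x) \<partial>lborel)"
    by (intro nn_integral_mono pw)
  also have "\<dots> = ennreal (2 powr q) * ((\<integral>\<^sup>+x. ennreal (\<bar>\<phi> x - ?A x\<bar> powr q) \<partial>lborel) + ennreal (a powr q) * ennreal W)"
    using mA mf \<Omega> by (simp add: nn_integral_cmult nn_integral_add nn_integral_cmult_indicator)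
  also have "\<dots> \<le> ennreal (2 powr q) * (ennreal (h powr q) * ennreal (Lq_int_vec q \<Omega> (cgrad \<phi>)) + ennreal (a powr q) * ennreal W)"
    using nn_integral_ball_average_error_le[OF diff cont contf Bf Bg q h] unfolding eIq
    by (intro mult_left_mono add_right_mono) auto
  also have "\<dots> = ennreal (2 powr q * (h powr q * Lq_int_vec q \<Omega> (cgrad \<phi>) + W * a powr q))"
    using \<Omega> by (simp add: ennreal_mult ennreal_plus mult_ac Lq_int_vec_def)
  finally show ?thesis
    unfolding Lq_int_def using \<Omega> a0 by (simp add: enn2real_leI Lq_int_vec_def)
qed

lemma L1_norm_le_Lp_cgrad:
  fixes \<phi> :: "'a::euclidean_space \<Rightarrow> real"
  assumes diff: "\<And>z. \<phi> differentiable (at z)" and cont: "continuous_on UNIV (cgrad \<phi>)"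
    and Bf: "\<And>z. \<bar>\<phi> z\<bar> \<le> Bf" and Bg: "\<And>z. norm (cgrad \<phi> z) \<le> Bg"
    and vanish: "\<And>x. x \<notin> \<Omega> \<Longrightarrow> \<phi> x = 0" "\<And>x. x \<notin> \<Omega> \<Longrightarrow> cgrad \<phi> x = 0"
    and \<Omega>: "\<Omega> \<in> sets lborel" "emeasure lborel \<Omega> = ennreal W" "W > 0" and R: "\<Omega> \<subseteq> ball 0 R" "R > 0"
    and p: "1 \<le> p"
  shows "(\<integral>\<^sup>+x. ennreal \<bar>\<phi> x\<bar> \<partial>lborel) < \<infinity>"
    and "enn2real (\<integral>\<^sup>+x. ennreal \<bar>\<phi> x\<bar> \<partial>lborel)
      \<le> 2 * R * (W powr (p-1) * Lq_int_vec p \<Omega> (cgrad \<phi>)) powr (1/p)"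
proof -
  have Bf0: "Bf \<ge> 0" using Bf[of 0] by linarith
  have Bg0: "Bg \<ge> 0" using Bg[of 0] norm_ge_zero[of "cgrad \<phi> 0"] by linarith
  let ?G = "\<lambda>x. norm (cgrad \<phi> x)"
  define P1 where "P1 = enn2real (\<integral>\<^sup>+x\<in>\<Omega>. ennreal \<bar>\<phi> x\<bar> \<partial>lborel)"
  define P1G where "P1G = enn2real (\<integral>\<^sup>+x\<in>\<Omega>. ennreal (?G x) \<partial>lborel)"
  define Ip where "Ip = Lq_int_vec p \<Omega> (cgrad \<phi>)"
  have P1G0: "P1G \<ge> 0" and Ip0: "Ip \<ge> 0" unfolding P1G_def Ip_def Lq_int_vec_def by simp_all
  have eP1: "(\<integral>\<^sup>+x. ennreal \<bar>\<phi> x\<bar> \<partial>lborel) = ennreal P1"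
    unfolding P1_def using Bf Bf0 vanish by (intro nn_integral_vanishing_bounded_eq_ennreal[OF \<Omega>(1,2)]) auto
  then show "(\<integral>\<^sup>+x. ennreal \<bar>\<phi> x\<bar> \<partial>lborel) < \<infinity>" by simp
  have eP1G: "(\<integral>\<^sup>+x. ennreal (?G x) \<partial>lborel) = ennreal P1G"
    unfolding P1G_def using Bg Bg0 vanish(2)
    by (intro nn_integral_vanishing_bounded_eq_ennreal[OF \<Omega>(1,2), of _ Bg]) auto
  have "ennreal P1 \<le> ennreal (2 * R * P1G)"
    using nn_integral_abs_le_cgrad[OF diff cont Bg vanish(1) R] R P1G0 unfolding eP1 eP1G
    by (simp add: ennreal_mult)
  then have poincare: "P1 \<le> 2 * R * P1G"
    using R P1G0 by (subst (asm) ennreal_le_iff) auto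
  have "(\<integral>\<^sup>+x. ennreal (indicator \<Omega> x * ?G x) \<partial>lborel) = ennreal P1G"
    unfolding eP1G[symmetric] using vanish(2) by (intro nn_integral_cong) (auto split: split_indicator)
  moreover have "(\<integral>\<^sup>+x. ennreal (indicator \<Omega> x * ?G x powr p) \<partial>lborel) = ennreal Ip"
    unfolding Ip_def Lq_int_vec_def using Bg Bg0 p
    by (subst nn_integral_set_bounded_eq_ennreal[OF \<Omega>(1,2), of _ "Bg powr p", symmetric])
      (auto intro!: powr_mono2 nn_integral_cong split: split_indicator)
  moreover have "?G \<in> borel_measurable lborel"
    using borel_measurable_continuous_onI[OF continuous_on_norm[OF cont]] by simp
  ultimately have "P1G powr p \<le> W powr (p-1) * Ip"
    using nn_integral_powr_mean[OF \<Omega>(1,2,3), of ?G Bg p] P1G0 Ip0 Bg p by simp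
  then have "(P1G powr p) powr (1/p) \<le> (W powr (p-1) * Ip) powr (1/p)"
    using p by (intro powr_mono2) auto
  then have "P1G \<le> (W powr (p-1) * Ip) powr (1/p)"
    using P1G0 p by (simp add: powr_powr)
  then have "2 * R * P1G \<le> 2 * R * (W powr (p-1) * Ip) powr (1/p)"
    using R by (intro mult_left_mono) auto
  then have "P1 \<le> 2 * R * (W powr (p-1) * Ip) powr (1/p)"
    using poincare by linarith
  then show "enn2real (\<integral>\<^sup>+x. ennreal \<bar>\<phi> x\<bar> \<partial>lborel) \<le> 2 * R * (W powr (p-1) * Ip) powr (1/p)"
    unfolding eP1 P1_def by simp
qed

lemma Lq_int_C1_interpolation:
  fixes \<phi> :: "'a::euclidean_space \<Rightarrow> real"
  assumes diff: "\<And>z. \<phi> differentiable (at z)" and cont: "continuous_on UNIV (cgrad \<phi>)"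
    and contf: "continuous_on UNIV \<phi>"
    and Bf: "\<And>z. \<bar>\<phi> z\<bar> \<le> Bf" and Bg: "\<And>z. norm (cgrad \<phi> z) \<le> Bg"
    and vanish: "\<And>x. x \<notin> \<Omega> \<Longrightarrow> \<phi> x = 0" "\<And>x. x \<notin> \<Omega> \<Longrightarrow> cgrad \<phi> x = 0"
    and \<Omega>: "\<Omega> \<in> sets lborel" "emeasure lborel \<Omega> = ennreal W" "W > 0" and R: "\<Omega> \<subseteq> ball 0 R" "R > 0"
    and pq: "1 \<le> p" "p \<le> q" and h: "h > 0"
  defines "m \<equiv> measure lborel (cball (0::'a) h)"
  shows "Lq_int q \<Omega> \<phi> \<le> 2 powr q * (h powr q * Lq_int_vec q \<Omega> (cgrad \<phi>)
          + W * (2 * R / m) powr q * (W powr (p-1) * Lq_int_vec p \<Omega> (cgrad \<phi>)) powr (q/p))"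
proof -
  define P1 where "P1 = enn2real (\<integral>\<^sup>+x. ennreal \<bar>\<phi> x\<bar> \<partial>lborel)"
  define Y where "Y = (W powr (p-1) * Lq_int_vec p \<Omega> (cgrad \<phi>)) powr (1/p)"
  note L1 = L1_norm_le_Lp_cgrad[OF diff cont Bf Bg vanish \<Omega> R pq(1), folded P1_def Y_def]
  have m0: "m > 0" unfolding m_def using measure_cball_pos[OF h] by simp
  have "\<bar>ball_average h \<phi> x\<bar> \<le> P1 / m" for x
    using abs_ball_average_le[OF contf h L1(1), of x] unfolding P1_def m_def .
  then have "Lq_int q \<Omega> \<phi> \<le> 2 powr q * (h powr q * Lq_int_vec q \<Omega> (cgrad \<phi>) + W * (P1 / m) powr q)"
    using \<Omega> pq h by (intro Lq_int_le_ball_average_split[OF diff cont contf Bf Bg vanish(2) \<Omega>(1,2)]) auto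
  also have "(P1 / m) powr q \<le> (2 * R / m) powr q * (W powr (p-1) * Lq_int_vec p \<Omega> (cgrad \<phi>)) powr (q/p)"
  proof -
    have "(P1 / m) powr q \<le> (2 * R * Y / m) powr q"
        using L1(2) m0 pq unfolding P1_def by (intro powr_mono2 divide_right_mono) auto
    also have "\<dots> = (2 * R / m) powr q * Y powr q"
      using R m0 unfolding Y_def by (simp add: powr_mult[symmetric])
    also have "Y powr q = (W powr (p-1) * Lq_int_vec p \<Omega> (cgrad \<phi>)) powr (q/p)"
      unfolding Y_def using pq by (simp add: powr_powr)
    finally show ?thesis .
  qed
  finally show ?thesis
    using \<Omega> by (simp add: mult_left_mono mult.assoc)
qed

lemma sobolev0_test_fun_close:
  assumes "sobolev0 q \<Omega> u g"
  obtains \<phi> where "test_fun \<Omega> \<phi>"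
    "(\<integral>\<^sup>+ x\<in>\<Omega>. ennreal (\<bar>\<phi> x - u x\<bar> powr q) \<partial>lborel) \<le> ennreal 1"
    "(\<integral>\<^sup>+ x\<in>\<Omega>. ennreal (norm (cgrad \<phi> x - g x) powr q) \<partial>lborel) \<le> ennreal 1"
proof -
  obtain \<phi>s where tf: "\<And>k. test_fun \<Omega> (\<phi>s k)"
    and cE: "(\<lambda>k. \<integral>\<^sup>+ x\<in>\<Omega>. ennreal (\<bar>\<phi>s k x - u x\<bar> powr q) \<partial>lborel) \<longlonglongrightarrow> 0"
    and cF: "(\<lambda>k. \<integral>\<^sup>+ x\<in>\<Omega>. ennreal (norm (cgrad (\<phi>s k) x - g x) powr q) \<partial>lborel) \<longlonglongrightarrow> 0"
    using assms unfolding sobolev0_def by blast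
  have "eventually (\<lambda>k. (\<integral>\<^sup>+ x\<in>\<Omega>. ennreal (\<bar>\<phi>s k x - u x\<bar> powr q) \<partial>lborel) < 1
      \<and> (\<integral>\<^sup>+ x\<in>\<Omega>. ennreal (norm (cgrad (\<phi>s k) x - g x) powr q) \<partial>lborel) < 1) sequentially"
    using order_tendstoD(2)[OF cE, of 1] order_tendstoD(2)[OF cF, of 1] by (auto intro: eventually_conj)
  then obtain k where
    "(\<integral>\<^sup>+ x\<in>\<Omega>. ennreal (\<bar>\<phi>s k x - u x\<bar> powr q) \<partial>lborel) < 1"
    "(\<integral>\<^sup>+ x\<in>\<Omega>. ennreal (norm (cgrad (\<phi>s k) x - g x) powr q) \<partial>lborel) < 1"
    unfolding eventually_sequentially by blast
  then show ?thesis using that[OF tf[of k]] by (simp add: less_imp_le)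
qed

lemma sobolev0_approx_test_fun:
  fixes \<Omega> :: "'a::euclidean_space set"
  assumes sob: "sobolev0 q \<Omega> u g"
    and \<Omega>: "\<Omega> \<in> sets lborel" "emeasure lborel \<Omega> = ennreal W" "W \<ge> 0" and pq: "0 < p" "p \<le> q"
  obtains \<phi> where "test_fun \<Omega> \<phi>" "Lq_int q \<Omega> u \<le> 2 powr q * (Lq_int q \<Omega> \<phi> + 1)"
    "Lq_int_vec q \<Omega> (cgrad \<phi>) \<le> 2 powr q * (Lq_int_vec q \<Omega> g + 1)"
    "Lq_int_vec p \<Omega> (cgrad \<phi>) \<le> 2 powr p * (Lq_int_vec p \<Omega> g + (W + 1))"
proof -
  have q: "q > 0" using pq by simp
  have [measurable]: "u \<in> borel_measurable lborel" "g \<in> borel_measurable lborel"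
    using sob unfolding sobolev0_def by auto
  obtain \<phi> where tf1: "test_fun \<Omega> \<phi>"
    and E: "(\<integral>\<^sup>+ x\<in>\<Omega>. ennreal (\<bar>\<phi> x - u x\<bar> powr q) \<partial>lborel) \<le> ennreal 1"
    and F: "(\<integral>\<^sup>+ x\<in>\<Omega>. ennreal (norm (cgrad \<phi> x - g x) powr q) \<partial>lborel) \<le> ennreal 1"
    using sobolev0_test_fun_close[OF sob] by blast
  obtain Bf Bg where Bf: "\<And>z. \<bar>\<phi> z\<bar> \<le> Bf" and Bg: "\<And>z. norm (cgrad \<phi> z) \<le> Bg"
    using test_fun_bounded[OF tf1] by metis
  note C1 = test_fun_C1[OF tf1]
  have [measurable]: "\<phi> \<in> borel_measurable lborel" "cgrad \<phi> \<in> borel_measurable lborel"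
    using borel_measurable_continuous_onI[OF C1(1)] borel_measurable_continuous_onI[OF C1(3)] by simp_all
  have fin: "(\<integral>\<^sup>+ x\<in>\<Omega>. ennreal (f x powr r) \<partial>lborel) < \<infinity>" if "\<And>z. f z \<le> B" "\<And>z. 0 \<le> f z" "r > 0" for f B r
    using nn_integral_set_le_measure[OF \<Omega>(1,2), of "\<lambda>x. f x powr r" "B powr r"] that
    by (simp add: le_less_trans powr_mono2 order_trans[OF that(2)])
  have tri: "norm (g x) \<le> norm (cgrad \<phi> x) + norm (cgrad \<phi> x - g x)"
    "norm (cgrad \<phi> x) \<le> norm (g x) + norm (cgrad \<phi> x - g x)" for x
    using norm_triangle_ineq4[of "cgrad \<phi> x" "cgrad \<phi> x - g x"] norm_triangle_ineq[of "g x" "cgrad \<phi> x - g x"]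
    by simp_all
  have gq: "(\<integral>\<^sup>+ x\<in>\<Omega>. ennreal (norm (g x) powr q) \<partial>lborel) < \<infinity>"
    using F Bg q by (intro enn2real_set_powr_le_close(1)[OF _ _ _ tri(1) _ _ _ q \<Omega>(1) _ F] fin) auto
  have gp: "(\<integral>\<^sup>+ x\<in>\<Omega>. ennreal (norm (g x) powr p) \<partial>lborel) < \<infinity>"
    using nn_integral_set_powr_le_measure_plus[of "\<lambda>x. norm (g x)", OF _ _ pq \<Omega>(1,2)] gq
    by (simp add: le_less_trans flip: ennreal_plus)
  have dp: "(\<integral>\<^sup>+ x\<in>\<Omega>. ennreal (norm (cgrad \<phi> x - g x) powr p) \<partial>lborel) \<le> ennreal (W + 1)"
    using nn_integral_set_powr_le_measure_plus[of "\<lambda>x. norm (cgrad \<phi> x - g x)", OF _ _ pq \<Omega>(1,2)] F \<Omega>(3)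
    by (auto simp: ennreal_plus intro: order_trans)
  show ?thesis
  proof (rule that[OF tf1])
    show "Lq_int q \<Omega> u \<le> 2 powr q * (Lq_int q \<Omega> \<phi> + 1)"
      unfolding Lq_int_def using Bf q
      by (intro enn2real_set_powr_le_close(2)[OF _ _ _ _ _ _ _ q \<Omega>(1) _ E] fin) auto
    show "Lq_int_vec q \<Omega> (cgrad \<phi>) \<le> 2 powr q * (Lq_int_vec q \<Omega> g + 1)"
      unfolding Lq_int_vec_def using gq q
      by (intro enn2real_set_powr_le_close(2)[OF _ _ _ tri(2) _ _ _ q \<Omega>(1) _ F]) auto
    show "Lq_int_vec p \<Omega> (cgrad \<phi>) \<le> 2 powr p * (Lq_int_vec p \<Omega> g + (W + 1))"
      unfolding Lq_int_vec_def using gp pq \<Omega>(3)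
      by (intro enn2real_set_powr_le_close(2)[OF _ _ _ tri(2) _ _ _ _ \<Omega>(1) _ dp]) auto
  qed
qed

lemma W0_Lq_interpolation:
  fixes \<Omega> :: "'a::euclidean_space set"
  assumes \<Omega>: "\<Omega> \<in> sets lborel" "emeasure lborel \<Omega> = ennreal W" "W > 0" "\<Omega> \<subseteq> ball 0 R" "R > 0"
    and pq: "1 \<le> p" "p \<le> q" and h: "h > 0" and u: "u \<in> W0 q \<Omega>"
  defines "m \<equiv> measure lborel (cball (0::'a) h)"
  shows "Lq_int q \<Omega> u \<le> 2 powr q * (2 powr q * (h powr q * (2 powr q * (Lq_int_vec q \<Omega> (D q \<Omega> u) + 1))
      + W * (2 * R / m) powr q * (W powr (p-1) * (2 powr p * (Lq_int_vec p \<Omega> (D q \<Omega> u) + (W + 1)))) powr (q/p)) + 1)"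
proof -
  let ?A = "Lq_int_vec q \<Omega> (D q \<Omega> u)" and ?P = "Lq_int_vec p \<Omega> (D q \<Omega> u)"
  have sob: "sobolev0 q \<Omega> u (D q \<Omega> u)"
    using u someI_ex[of "sobolev0 q \<Omega> u"] unfolding W0_def D_def by auto
  obtain \<phi> where tf: "test_fun \<Omega> \<phi>" and Lu: "Lq_int q \<Omega> u \<le> 2 powr q * (Lq_int q \<Omega> \<phi> + 1)"
    and A\<phi>: "Lq_int_vec q \<Omega> (cgrad \<phi>) \<le> 2 powr q * (?A + 1)"
    and P\<phi>: "Lq_int_vec p \<Omega> (cgrad \<phi>) \<le> 2 powr p * (?P + (W + 1))"
    using sobolev0_approx_test_fun[OF sob \<Omega>(1,2), of p] \<Omega>(3) pq by auto
  obtain Bf Bg where bounds: "\<And>z. \<bar>\<phi> z\<bar> \<le> Bf" "\<And>z. norm (cgrad \<phi> z) \<le> Bg"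
    and vanish: "\<And>x. x \<notin> \<Omega> \<Longrightarrow> \<phi> x = 0" "\<And>x. x \<notin> \<Omega> \<Longrightarrow> cgrad \<phi> x = 0"
    using test_fun_bounded[OF tf] by metis
  note C1 = test_fun_C1[OF tf]
  have "Lq_int q \<Omega> \<phi> + 1 \<le> 2 powr q * (h powr q * Lq_int_vec q \<Omega> (cgrad \<phi>)
      + W * (2 * R / m) powr q * (W powr (p-1) * Lq_int_vec p \<Omega> (cgrad \<phi>)) powr (q/p)) + 1"
    unfolding m_def using Lq_int_C1_interpolation[OF C1(2,3,1) bounds vanish \<Omega>(1-3) \<Omega>(4,5) pq h] by simp
  also have "\<dots> \<le> 2 powr q * (h powr q * (2 powr q * (?A + 1))
      + W * (2 * R / m) powr q * (W powr (p-1) * (2 powr p * (?P + (W + 1)))) powr (q/p)) + 1"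
    using A\<phi> P\<phi> \<Omega>(3) pq by (intro add_right_mono mult_left_mono add_mono powr_mono2)
      (auto simp: Lq_int_vec_def)
  finally have "2 powr q * (Lq_int q \<Omega> \<phi> + 1) \<le> 2 powr q * (2 powr q * (h powr q * (2 powr q * (?A + 1))
      + W * (2 * R / m) powr q * (W powr (p-1) * (2 powr p * (?P + (W + 1)))) powr (q/p)) + 1)"
    by (rule mult_left_mono) simp
  with Lu show ?thesis by (rule order_trans)
qed

lemma W0_Lq_int_le_small_gradient:
  fixes \<Omega> :: "'a::euclidean_space set"
  assumes \<Omega>: "\<Omega> \<in> sets lborel" "emeasure lborel \<Omega> = ennreal W" "W > 0" "\<Omega> \<subseteq> ball 0 R" "R > 0"
    and pq: "1 \<le> p" "p \<le> q" and \<delta>: "\<delta> > 0"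
  obtains K where "\<And>u. u \<in> W0 q \<Omega> \<Longrightarrow> Lq_int_vec p \<Omega> (D q \<Omega> u) \<le> M
      \<Longrightarrow> Lq_int q \<Omega> u \<le> \<delta> * Lq_int_vec q \<Omega> (D q \<Omega> u) + K"
proof -
  have q: "q > 0" using pq by simp
  define h where "h = \<delta> powr (1/q) / 8"
  have h: "h > 0" unfolding h_def using \<delta> by simp
  have h\<delta>: "2 powr q * (2 powr q * (h powr q * 2 powr q)) = \<delta>"
  proof -
    have "2 powr q * (2 powr q * 2 powr q) = (8::real) powr q" by (simp add: powr_mult[symmetric])
    moreover have "h powr q = \<delta> / 8 powr q"
      unfolding h_def using \<delta> q by (simp add: powr_divide powr_powr)
    ultimately show ?thesis by (simp add: mult_ac)
  qed
  define X where "X P = W * (2 * R / measure lborel (cball (0::'a) h)) powr q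
      * (W powr (p-1) * (2 powr p * (P + (W + 1)))) powr (q/p)" for P
  show ?thesis
  proof (rule that[of "\<delta> + 2 powr q * 2 powr q * X M + 2 powr q"])
    fix u assume u: "u \<in> W0 q \<Omega>" and PM: "Lq_int_vec p \<Omega> (D q \<Omega> u) \<le> M"
    let ?A = "Lq_int_vec q \<Omega> (D q \<Omega> u)" and ?P = "Lq_int_vec p \<Omega> (D q \<Omega> u)"
    have "Lq_int q \<Omega> u \<le> 2 powr q * (2 powr q * (h powr q * (2 powr q * (?A + 1)) + X ?P) + 1)"
      using W0_Lq_interpolation[OF \<Omega> pq h u] unfolding X_def by simp
    also have "\<dots> = (2 powr q * (2 powr q * (h powr q * 2 powr q))) * (?A + 1) + 2 powr q * 2 powr q * X ?P + 2 powr q"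
      by (simp add: algebra_simps)
    also have "X ?P \<le> X M"
      unfolding X_def using PM \<Omega>(3) pq
      by (intro mult_left_mono powr_mono2) (auto simp: Lq_int_vec_def)
    finally show "Lq_int q \<Omega> u \<le> \<delta> * ?A + (\<delta> + 2 powr q * 2 powr q * X M + 2 powr q)"
      unfolding h\<delta> by (simp add: algebra_simps)
  qed
qed

section \<open>Minimizing sequences on the Nehari manifold\<close>

lemma bounded_C2_domain_measure:
  fixes \<Omega> :: "'a::euclidean_space set"
  assumes "bounded_C2_domain \<Omega>"
  obtains W R where "\<Omega> \<in> sets lborel" "emeasure lborel \<Omega> = ennreal W" "W > 0" "\<Omega> \<subseteq> ball 0 R" "R > 0"
proof -
  have o: "open \<Omega>" and ne: "\<Omega> \<noteq> {}" and b: "bounded \<Omega>"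
    using assms unfolding bounded_C2_domain_def by auto
  have sets: "\<Omega> \<in> sets lborel" using o by simp
  have eW: "emeasure lborel \<Omega> = ennreal (measure lborel \<Omega>)"
    using emeasure_bounded_finite[OF b] by (intro emeasure_eq_ennreal_measure) simp
  obtain x r where r: "r > 0" "ball x r \<subseteq> \<Omega>" using o ne openE by blast
  have "0 < measure lborel (ball x r)" using r by (intro content_ball_pos) simp
  also have "\<dots> \<le> measure lborel \<Omega>"
    using r sets emeasure_bounded_finite[OF b] by (intro measure_mono_fmeasurable) (auto simp: fmeasurable_def)
  finally have "measure lborel \<Omega> > 0" .
  moreover obtain R where "R > 0" "\<Omega> \<subseteq> ball 0 R" using bounded_subset_ballD[OF b] by blast
  ultimately show ?thesis using that sets eW by blast
qed

lemma energy_nehari_eq: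
  assumes "u \<in> nehari \<alpha> \<beta> p q lam \<Omega>"
  shows "energy \<alpha> \<beta> p q lam \<Omega> u = \<alpha> * (1/p - 1/q) * Lq_int_vec p \<Omega> (D q \<Omega> u)"
proof -
  have "lam * Lq_int q \<Omega> u = \<alpha> * Lq_int_vec p \<Omega> (D q \<Omega> u) + \<beta> * Lq_int_vec q \<Omega> (D q \<Omega> u)"
    using assms unfolding nehari_def by simp
  then show ?thesis
    unfolding energy_def by (simp add: add_divide_distrib algebra_simps)
qed

lemma absorb_small_multiple:
  fixes A L \<beta> c \<delta> K :: real
  assumes "\<beta> > 0" "c \<ge> 0" "A \<ge> 0" "\<beta> * A \<le> c * L" "L \<le> \<delta> * A + K" "c * \<delta> \<le> \<beta> / 2"
  shows "A \<le> 2 * c * K / \<beta>"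
proof -
  have "\<beta> * A \<le> c * \<delta> * A + c * K"
    using assms(2,4,5) mult_left_mono[OF assms(5) assms(2)] by (simp add: algebra_simps)
  also have "c * \<delta> * A \<le> \<beta> / 2 * A" using assms(3,6) by (rule mult_right_mono[rotated])
  finally show ?thesis using assms(1) by (simp add: field_simps)
qed

lemma nehari_Lp_gradient_bounded:
  assumes neh: "\<And>n. u n \<in> nehari \<alpha> \<beta> p q lam \<Omega>" and E: "Bseq (\<lambda>n. energy \<alpha> \<beta> p q lam \<Omega> (u n))"
    and \<alpha>: "\<alpha> > 0" and pq: "0 < p" "p < q"
  obtains M where "\<And>n. Lq_int_vec p \<Omega> (D q \<Omega> (u n)) \<le> M"
proof -
  have \<kappa>: "\<alpha> * (1/p - 1/q) > 0" using \<alpha> pq by (simp add: field_simps)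
  obtain B where "\<And>n. norm (energy \<alpha> \<beta> p q lam \<Omega> (u n)) \<le> B"
    using E unfolding Bseq_def by blast
  then have "\<alpha> * (1/p - 1/q) * Lq_int_vec p \<Omega> (D q \<Omega> (u n)) \<le> B" for n
    using energy_nehari_eq[OF neh] by (metis abs_le_D1 real_norm_def)
  then show ?thesis
    using that[of "B / (\<alpha> * (1/p - 1/q))"] \<kappa> by (simp add: pos_le_divide_eq mult.commute)
qed

lemma nehari_W_norm_bounded:
  fixes \<Omega> :: "'a::euclidean_space set"
  assumes \<Omega>: "\<Omega> \<in> sets lborel" "emeasure lborel \<Omega> = ennreal W" "W > 0" "\<Omega> \<subseteq> ball 0 R" "R > 0"
    and \<alpha>: "\<alpha> \<ge> 0" and \<beta>: "\<beta> > 0" and pq: "1 \<le> p" "p \<le> q"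
    and neh: "\<And>n. u n \<in> nehari \<alpha> \<beta> p q lam \<Omega>" and PM: "\<And>n. Lq_int_vec p \<Omega> (D q \<Omega> (u n)) \<le> M"
  shows "\<exists>C. \<forall>n. W_norm q \<Omega> (u n) \<le> C"
proof -
  define L where "L n = Lq_int q \<Omega> (u n)" for n
  define A where "A n = Lq_int_vec q \<Omega> (D q \<Omega> (u n))" for n
  have nn: "L n \<ge> 0" "A n \<ge> 0" "Lq_int_vec p \<Omega> (D q \<Omega> (u n)) \<ge> 0" for n
    unfolding L_def A_def Lq_int_def Lq_int_vec_def by auto
  define \<delta> where "\<delta> = \<beta> / (2 * (\<bar>lam\<bar> + 1))"
  have "\<delta> > 0" unfolding \<delta>_def using \<beta> by (simp add: add_pos_nonneg)
  then obtain K where "\<And>v. v \<in> W0 q \<Omega> \<Longrightarrow> Lq_int_vec p \<Omega> (D q \<Omega> v) \<le> M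
      \<Longrightarrow> Lq_int q \<Omega> v \<le> \<delta> * Lq_int_vec q \<Omega> (D q \<Omega> v) + K"
    using W0_Lq_int_le_small_gradient[OF \<Omega> pq] by blast
  then have K: "L n \<le> \<delta> * A n + K" for n
    using neh PM unfolding L_def A_def nehari_def by blast
  have "\<beta> * A n \<le> \<bar>lam\<bar> * L n" for n
  proof -
    have "\<beta> * A n = lam * L n - \<alpha> * Lq_int_vec p \<Omega> (D q \<Omega> (u n))"
      using neh[of n] unfolding L_def A_def nehari_def by simp
    also have "\<dots> \<le> lam * L n" using \<alpha> nn(3)[of n] by simp
    also have "\<dots> \<le> \<bar>lam\<bar> * L n" using nn(1)[of n] by (intro mult_right_mono) auto
    finally show ?thesis .
  qed
  moreover have "\<bar>lam\<bar> * \<delta> \<le> \<beta> / 2"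
    using \<beta> unfolding \<delta>_def by (simp add: field_simps)
  ultimately have AK: "A n \<le> 2 * \<bar>lam\<bar> * K / \<beta>" for n
    using absorb_small_multiple[OF \<beta> abs_ge_zero nn(2) _ K] by blast
  have LK: "L n \<le> \<delta> * (2 * \<bar>lam\<bar> * K / \<beta>) + K" for n
    using K[of n] mult_left_mono[OF AK[of n], of \<delta>] \<open>\<delta> > 0\<close> by linarith
  show ?thesis
  proof (intro exI allI)
    fix n
    show "W_norm q \<Omega> (u n) \<le> (\<delta> * (2 * \<bar>lam\<bar> * K / \<beta>) + K) powr (1/q) + (2 * \<bar>lam\<bar> * K / \<beta>) powr (1/q)"
      unfolding W_norm_def L_def[symmetric] A_def[symmetric]
      using LK[of n] AK[of n] nn[of n] pq by (intro add_mono powr_mono2) auto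
  qed
qed

theorem proposition3:
  fixes \<Omega> :: "'a::euclidean_space set"
    and \<alpha> \<beta> p q lam :: real
    and u :: "nat \<Rightarrow> 'a \<Rightarrow> real"
  assumes "bounded_C2_domain \<Omega>"
    and "\<alpha> > 0" and "\<beta> > 0" and "1 < p" and "p < q"
    and "lam > \<beta> * lambda1_hat q \<Omega>"
    and "\<forall>n. u n \<in> nehari \<alpha> \<beta> p q lam \<Omega>"
    and "(\<lambda>n. energy \<alpha> \<beta> p q lam \<Omega> (u n)) \<longlonglongrightarrow> m_lambda \<alpha> \<beta> p q lam \<Omega>"
  shows "\<exists>C. \<forall>n. W_norm q \<Omega> (u n) \<le> C"
proof -
  obtain W R where \<Omega>: "\<Omega> \<in> sets lborel" "emeasure lborel \<Omega> = ennreal W" "W > 0" "\<Omega> \<subseteq> ball 0 R" "R > 0"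
    using bounded_C2_domain_measure[OF assms(1)] by blast
  have neh: "\<And>n. u n \<in> nehari \<alpha> \<beta> p q lam \<Omega>" using assms(7) by blast
  have "Bseq (\<lambda>n. energy \<alpha> \<beta> p q lam \<Omega> (u n))"
    using assms(8) by (intro convergent_imp_Bseq convergentI)
  moreover have "0 < p" using assms(4) by simp
  ultimately obtain M where "\<And>n. Lq_int_vec p \<Omega> (D q \<Omega> (u n)) \<le> M"
    using nehari_Lp_gradient_bounded[of u \<alpha> \<beta> p q lam \<Omega>] neh assms(2,5) by blast
  then show ?thesis
    by (intro nehari_W_norm_bounded[OF \<Omega>, where \<alpha>=\<alpha> and \<beta>=\<beta> and p=p and lam=lam and M=M]) (use neh assms(2-5) in auto)
qed

end
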